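(* Let $\{\omega^t\}_{t\in[0,1]}$ be nonnegative locally integrable functions on $\mathbb{T}$ with $\varphi^t=\log\omega^t$ such that $(t,x)\mapsto\varphi^t(x)$ is measurable and each $\varphi^t$ has mean value zero on $\mathbb{T}$. Let $\varphi(x)=\int_0^1\varphi^t(x+t)\,dt$. (a) If there is $C_3^d$ with $\varphi^t_I-\operatorname{ess\,inf}_{x\in I}\varphi^t(x)\le C_3^d$ for all $t\in[0,1]$ and all $I\in\mathcal{D}$, then there is $C_3$ depending only on $C_3^d$ with $\varphi_Q-\operatorname{ess\,inf}_{x\in Q}\varphi(x)\le C_3$ for all intervals $Q\subset\mathbb{T}$. (b) If there is $C_4^d$ with $\operatorname{ess\,sup}_{x\in I}\varphi^t(x)-\varphi^t_I\le C_4^d$ for all $t\in[0,1]$ and all $I\in\mathcal{D}$, then there is $C_4$ depending only on $C_4^d$ with $\operatorname{ess\,sup}_{x\in Q}\varphi(x)-\varphi_Q\le C_4$ for all intervals $Q\subset\mathbb{T}$.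
   Context: $\mathbb{T}$ is the circle $[0,1]$ with endpoints identified; $x+t$ taken mod 1. $\mathcal{D}$ is the set of dyadic intervals $\{[0,1]\}\cup\{[j2^{-k},(j+1)2^{-k}):k\in\mathbb{N},0\le j<2^k\}$. $f_E=\frac1{|E|}\int_Ef$. *)

theory Defs
  imports "HOL-Analysis.Analysis" "HOL-Probability.Essential_Supremum"
begin

text \<open>The circle T is modelled as [0,1); addition mod 1 is x + t taken through frac.\<close>

definition dyadic_intervals :: "real set set" where
  "dyadic_intervals = {{0..1}} \<union>
     {{real j / 2 ^ k ..< (real j + 1) / 2 ^ k} | k j. j < 2 ^ k}"

text \<open>Intervals (arcs) of the circle of positive length l, starting at a, possibly wrapping around.\<close>
definition circle_arc :: "real \<Rightarrow> real \<Rightarrow> real set" where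
  "circle_arc a l = (\<lambda>s. frac (a + s)) ` {0..<l}"

definition avg :: "(real \<Rightarrow> real) \<Rightarrow> real set \<Rightarrow> real" where
  "avg f E = (LINT x:E|lborel. f x) / measure lborel E"

definition ess_sup_on :: "real set \<Rightarrow> (real \<Rightarrow> real) \<Rightarrow> ereal" where
  "ess_sup_on E f = esssup (restrict_space lborel E) (\<lambda>x. ereal (f x))"

definition ess_inf_on :: "real set \<Rightarrow> (real \<Rightarrow> real) \<Rightarrow> ereal" where
  "ess_inf_on E f = - esssup (restrict_space lborel E) (\<lambda>x. - ereal (f x))"

text \<open>Standing hypotheses on the family phi t = log omega t, t in [0,1].\<close>
definition admissible_family :: "(real \<Rightarrow> real \<Rightarrow> real) \<Rightarrow> bool" where
  "admissible_family \<phi> \<longleftrightarrow>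
     (\<lambda>(t, x). \<phi> t x) \<in> borel_measurable (restrict_space (lborel \<Otimes>\<^sub>M lborel) ({0..1} \<times> {0..<1})) \<and>
     (\<forall>t\<in>{0..1}. set_integrable lborel {0..<1} (\<lambda>x. exp (\<phi> t x)) \<and>
                 set_integrable lborel {0..<1} (\<phi> t) \<and>
                 (LINT x:{0..<1}|lborel. \<phi> t x) = 0)"

definition averaged_phi :: "(real \<Rightarrow> real \<Rightarrow> real) \<Rightarrow> real \<Rightarrow> real" where
  "averaged_phi \<phi> x = (LINT t:{0..1}|lborel. \<phi> t (frac (x + t)))"

end

theory Submission
  imports Defs
begin

(* Write f^t(y) = phi t (frac y) for the 1-periodic extension of phi t.  Part (b) follows
   from part (a) applied to the family -phi, since negation turns ess sup - mean into
   mean - ess inf; part (a) is the "random dyadic grid" argument.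

   If f >= f_I - C a.e. on every dyadic I, a child average exceeds its parent average by
   at most C, so a level-i descendant of a level-j interval has average at most
   (i - j) C above it.  An arbitrary interval Q = [u, u+l) is split at its dyadic point p
   of coarsest level j; Q lies in the union of the two level-j neighbours of p, which share
   a parent, and each piece of Q is controlled by the first dyadic interval at p it fits
   into.  This gives f >= f_Q - C H(l,u) a.e. on Q, where H(l,u) = 5 + #{i <= K(l) : Q
   contains a level-i dyadic point} and 2^-(K(l)+1) < l <= 2^-K(l).  The translate Q + t
   contains a level-i point only for t in a set of measure <= 2^(i+1) l, so H(l, a+t) has
   mean <= 9 over t in [0,1], and Fubini gives averaged_phi >= mean - 9 C a.e. on Q. *)

lemma shift_integrable: "integrable lborel (\<lambda>x. g (x + c)) \<longleftrightarrow> integrable lborel (g::real\<Rightarrow>real)"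
  using lborel_integrable_real_affine_iff[of 1 g c] by (simp add: add.commute)

lemma shift_integral: "(\<integral>x. g (x + c) \<partial>lborel) = (\<integral>x. (g::real\<Rightarrow>real) x \<partial>lborel)"
  using lborel_integral_real_affine[of 1 g c] by (simp add: add.commute)

lemma indicator_Ico_shift: "indicator {\<alpha>+c..<\<beta>+c} ((x::real) + c) = (indicator {\<alpha>..<\<beta>} x :: real)"
  by (simp add: indicator_def)

lemma shift_set_integrable:
  "set_integrable lborel {\<alpha>+c..<\<beta>+c} g \<longleftrightarrow> set_integrable lborel {\<alpha>..<\<beta>} (\<lambda>x. (g::real\<Rightarrow>real) (x + c))"
  unfolding set_integrable_def
  using shift_integrable[of "\<lambda>x. indicator {\<alpha>+c..<\<beta>+c} x *\<^sub>R g x" c]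
  by (simp add: indicator_Ico_shift)

lemma shift_set_integral:
  "(LINT x:{\<alpha>+c..<\<beta>+c}|lborel. g x) = (LINT x:{\<alpha>..<\<beta>}|lborel. (g::real\<Rightarrow>real) (x + c))"
  unfolding set_lebesgue_integral_def
  using shift_integral[of "\<lambda>x. indicator {\<alpha>+c..<\<beta>+c} x *\<^sub>R g x" c]
  by (simp add: indicator_Ico_shift)

lemma shift_set_AE:
  assumes "Measurable.pred borel P"
    and "AE x in lborel. x \<in> {\<alpha>+c..<\<beta>+c} \<longrightarrow> P x"
  shows "AE x in lborel. x \<in> {\<alpha>..<\<beta>} \<longrightarrow> P (x + (c::real))"
proof -
  have "AE x in lborel. (x + c) \<in> {\<alpha>+c..<\<beta>+c} \<longrightarrow> P (x + c)"
    using AE_borel_affine[of 1 "\<lambda>x. x \<in> {\<alpha>+c..<\<beta>+c} \<longrightarrow> P x" c] assms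
    by (simp add: add.commute)
  then show ?thesis by simp
qed

lemma set_integral_const_Ico: "a \<le> b \<Longrightarrow> (LINT x:{a..<(b::real)}|lborel. c) = (b - a) * c"
  by (simp add: set_integral_const)

lemma set_integral_ge_const:
  fixes f :: "real \<Rightarrow> real"
  assumes "set_integrable lborel {\<alpha>..<\<beta>} f" "\<alpha> \<le> \<beta>"
    and "AE y in lborel. y \<in> {\<alpha>..<\<beta>} \<longrightarrow> c \<le> f y"
  shows "(\<beta> - \<alpha>) * c \<le> (LINT y:{\<alpha>..<\<beta>}|lborel. f y)"
proof -
  have "(LINT y:{\<alpha>..<\<beta>}|lborel. c) \<le> (LINT y:{\<alpha>..<\<beta>}|lborel. f y)"
    by (rule set_integral_mono_AE[OF _ assms(1)])
      (use assms(2,3) in \<open>auto simp: set_integrable_def\<close>)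
  then show ?thesis using assms(2) by (simp add: set_integral_const_Ico)
qed

lemma Ico_split_integral:
  fixes f :: "real \<Rightarrow> real"
  assumes "a \<le> b" "b \<le> c" "set_integrable lborel {a..<b} f" "set_integrable lborel {b..<c} f"
  shows "(LINT x:{a..<c}|lborel. f x) = (LINT x:{a..<b}|lborel. f x) + (LINT x:{b..<c}|lborel. f x)"
proof -
  have "{a..<c} = {a..<b} \<union> {b..<c}" using assms by auto
  then show ?thesis using set_integral_Un[OF _ assms(3,4)] by auto
qed

lemma AE_on_subset:
  assumes "AE y in lborel. y \<in> A \<longrightarrow> P y" "B \<subseteq> A"
  shows "AE y in lborel. y \<in> B \<longrightarrow> P y"
  using assms by auto

lemma avg_Ico: "a < b \<Longrightarrow> avg f {a..<b} = (LINT y:{a..<b}|lborel. f y) / (b - a)"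
  unfolding avg_def by simp

lemma avg_uminus: "avg (\<lambda>x. - f x) I = - avg f I"
  unfolding avg_def set_lebesgue_integral_def by simp

section \<open>Dyadic intervals of the real line\<close>

definition dyadic_ivl :: "nat \<Rightarrow> int \<Rightarrow> real set" where
  "dyadic_ivl k m = {real_of_int m / 2^k ..< (real_of_int m + 1) / 2^k}"

lemma measure_dyadic_ivl: "measure lborel (dyadic_ivl k m) = 1 / 2^k"
  unfolding dyadic_ivl_def by (simp add: divide_simps diff_divide_distrib)

lemma dyadic_ivl_sets[measurable]: "dyadic_ivl k m \<in> sets lborel"
  unfolding dyadic_ivl_def by simp

lemma dyadic_ivl_in_dyadic_intervals: "j < 2^k \<Longrightarrow> dyadic_ivl k (int j) \<in> dyadic_intervals"
  unfolding dyadic_intervals_def dyadic_ivl_def by auto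

lemma dyadic_ivl_subset_unit: "j < 2^k \<Longrightarrow> dyadic_ivl k (int j) \<subseteq> {0..<1}"
proof -
  assume j: "j < 2^k"
  then have "real j + 1 \<le> 2^k"
    by (metis Suc_leI of_nat_Suc of_nat_le_iff of_nat_numeral of_nat_power add.commute)
  then have "(real j + 1) / 2^k \<le> 1" by (simp add: divide_simps)
  then show ?thesis unfolding dyadic_ivl_def by auto
qed

lemma dyadic_ivl_shift:
  "dyadic_ivl k (m + 2^k * n) = {real_of_int m / 2^k + real_of_int n ..< (real_of_int m + 1) / 2^k + real_of_int n}"
  unfolding dyadic_ivl_def by (simp add: add_divide_distrib algebra_simps)

lemma ex_pow_small: "0 < a \<Longrightarrow> \<exists>n. 1 / 2^n < (a::real)"
proof -
  assume a: "0 < a"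
  obtain n where "1 / a < 2^n" using real_arch_pow[of 2 "1/a"] by auto
  then have "1 / 2^n < a" using a by (simp add: divide_simps mult.commute)
  then show ?thesis by blast
qed

lemma exist_level:
  fixes a :: real
  assumes "0 < a" "a \<le> 1 / 2^j"
  shows "\<exists>i\<ge>j. 1 / 2^(Suc i) < a \<and> a \<le> 1 / 2^i"
proof -
  obtain n where n: "1 / 2^n < a" using ex_pow_small[OF assms(1)] by blast
  define N where "N = (LEAST n. 1 / 2^n < (a::real))"
  have N: "1 / 2^N < a" unfolding N_def by (rule LeastI[of _ n], rule n)
  have "N \<noteq> 0"
  proof
    assume "N = 0"
    then have "1 < a" using N by simp
    moreover have "1 / (2::real)^j \<le> 1" by (simp add: divide_simps)
    ultimately show False using assms(2) by linarith
  qed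
  then obtain i where i: "N = Suc i" by (cases N) auto
  have "\<not> 1 / 2^i < a" using not_less_Least[of i "\<lambda>n. 1 / 2^n < a"] i unfolding N_def by simp
  then have ai: "a \<le> 1 / 2^i" by simp
  have "j \<le> i"
  proof (rule ccontr)
    assume "\<not> j \<le> i"
    then have "(2::real)^(Suc i) \<le> 2^j" by (intro power_increasing) simp_all
    then have "1 / 2^j \<le> 1 / (2::real)^(Suc i)" by (simp add: frac_le)
    then show False using N i assms(2) by simp
  qed
  then show ?thesis using N i ai by auto
qed

definition coarse_level :: "real \<Rightarrow> nat" where
  "coarse_level l = (LEAST n. 1 / 2^(Suc n) < l)"

lemma coarse_level:
  assumes "0 < l" "l \<le> 1"
  shows "1 / 2^(Suc (coarse_level l)) < l" "l \<le> 1 / 2^(coarse_level l)"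
proof -
  obtain n where n: "1 / 2^n < l" using ex_pow_small[OF assms(1)] by blast
  have "1 / 2^(Suc n) \<le> 1 / (2::real)^n" by (simp add: divide_simps)
  then have "1 / 2^(Suc n) < l" using n by linarith
  then show "1 / 2^(Suc (coarse_level l)) < l" unfolding coarse_level_def by (rule LeastI)
  show "l \<le> 1 / 2^(coarse_level l)"
  proof (cases "coarse_level l")
    case 0 then show ?thesis using assms by simp
  next
    case (Suc k)
    have "\<not> 1 / 2^(Suc k) < l"
      using not_less_Least[of k "\<lambda>n. 1 / 2^(Suc n) < l"] Suc unfolding coarse_level_def by simp
    then show ?thesis using Suc by simp
  qed
qed

section \<open>The coarsest dyadic point inside an interval\<close>

text \<open>If p = m/2^j lies inside Q = [u, u+l) and no dyadic point of a coarser level does, then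
  Q \<subseteq> [p - 2^-j, p + 2^-j), the union of the two level-j neighbours of p, and these are
  siblings (m is odd) unless j = 0: otherwise p or one of p \<plusminus> 2^-j would be a coarser point
  inside Q.\<close>
lemma coarsest_point_neighbours:
  fixes m :: int
  assumes m: "u < real_of_int m / 2^j" "real_of_int m / 2^j < u + l" and l: "l \<le> 1"
    and coarsest: "\<And>n m'. n < j \<Longrightarrow> \<not> (u < real_of_int m' / 2^n \<and> real_of_int m' / 2^n < u + l)"
  shows "real_of_int m / 2^j - 1 / 2^j \<le> u \<and> u + l \<le> real_of_int m / 2^j + 1 / 2^j \<and> (j = 0 \<or> odd m)"
proof -
  define p where "p = real_of_int m / 2^j"
  define e where "e = (1::real) / 2^j"
  have pe1: "(real_of_int m - 1) / 2^j = p - e" unfolding p_def e_def by (simp add: diff_divide_distrib)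
  have pe2: "(real_of_int m + 1) / 2^j = p + e" unfolding p_def e_def by (simp add: add_divide_distrib)
  have "p - e \<le> u \<and> u + l \<le> p + e \<and> (j = 0 \<or> odd m)"
  proof (cases j)
    case 0
    then have "e = 1" "p = real_of_int m" unfolding e_def p_def by auto
    then show ?thesis using m l 0 unfolding p_def by auto
  next
    case (Suc j')
    have jj: "j' < j" using Suc by simp
    have pw: "(2::real)^j = 2 * 2^j'" using Suc by simp
    have om: "odd m"
    proof
      assume "even m"
      then obtain q where q: "m = 2 * q" by blast
      have "real_of_int q / 2^j' = p" unfolding p_def q pw by simp
      then show False using coarsest[OF jj, of q] m unfolding p_def by simp
    qed
    then obtain q where q: "m = 2 * q + 1" by (metis oddE)
    have "p - e \<le> u"
    proof (rule ccontr)
      assume h: "\<not> p - e \<le> u"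
      have "real_of_int q / 2^j' = p - e" unfolding pe1[symmetric] q pw by simp
      moreover have "p - e < u + l" using m unfolding p_def e_def by (simp add: divide_simps)
      ultimately show False using coarsest[OF jj, of q] h by simp
    qed
    moreover have "u + l \<le> p + e"
    proof (rule ccontr)
      assume h: "\<not> u + l \<le> p + e"
      have "real_of_int (q + 1) / 2^j' = p + e" unfolding pe2[symmetric] q pw by (simp add: field_simps)
      moreover have "u < p + e" using m unfolding p_def e_def by (simp add: divide_simps)
      ultimately show False using coarsest[OF jj, of "q + 1"] h by simp
    qed
    ultimately show ?thesis using om by simp
  qed
  then show ?thesis unfolding p_def e_def .
qed

lemma coarsest_dyadic_point:
  assumes l: "0 < l" "l \<le> 1"
  obtains j and m :: int where
    "j \<le> Suc (coarse_level l)"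
    "u < real_of_int m / 2^j" "real_of_int m / 2^j < u + l"
    "real_of_int m / 2^j - 1 / 2^j \<le> u" "u + l \<le> real_of_int m / 2^j + 1 / 2^j"
    "j = 0 \<or> odd m"
proof -
  define P where "P n \<longleftrightarrow> (\<exists>m::int. u < real_of_int m / 2^n \<and> real_of_int m / 2^n < u + l)" for n
  have PK: "P (Suc (coarse_level l))"
  proof -
    define N where "N = Suc (coarse_level l)"
    define m where "m = \<lfloor>u * 2^N\<rfloor> + 1"
    have "u * 2^N < real_of_int m" unfolding m_def by linarith
    then have m1: "u < real_of_int m / 2^N" by (simp add: divide_simps)
    have "real_of_int m \<le> u * 2^N + 1" unfolding m_def by linarith
    then have "real_of_int m / 2^N \<le> u + 1/2^N" by (simp add: divide_simps)
    then have m2: "real_of_int m / 2^N < u + l" using coarse_level(1)[OF l] unfolding N_def by linarith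
    show ?thesis unfolding P_def N_def[symmetric] using m1 m2 by blast
  qed
  define j where "j = (LEAST n. P n)"
  have jle: "j \<le> Suc (coarse_level l)" unfolding j_def by (rule Least_le[of P, OF PK])
  have notP: "\<And>n. n < j \<Longrightarrow> \<not> P n" unfolding j_def by (rule not_less_Least)
  have "P j" unfolding j_def by (rule LeastI[of P, OF PK])
  then obtain m where m: "u < real_of_int m / 2^j" "real_of_int m / 2^j < u + l"
    unfolding P_def by blast
  show ?thesis
    using that[OF jle m] coarsest_point_neighbours[OF m l(2)] notP unfolding P_def by blast
qed

section \<open>The penalty function H(l, u)\<close>

definition level_hit :: "nat \<Rightarrow> real \<Rightarrow> real \<Rightarrow> real" where
  "level_hit i l u = (if \<exists>m::int. u < real_of_int m / 2^i \<and> real_of_int m / 2^i < u + l then 1 else 0)"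

definition penalty :: "real \<Rightarrow> real \<Rightarrow> real" where
  "penalty l u = 5 + (\<Sum>i\<le>coarse_level l. level_hit i l u)"

lemma level_hit_nonneg: "0 \<le> level_hit i l u"
  unfolding level_hit_def by simp

lemma level_hit_le1: "level_hit i l u \<le> 1"
  unfolding level_hit_def by simp

lemma level_hit_indicator:
  "level_hit i l = indicator (\<Union>m::int. {real_of_int m/2^i - l <..< real_of_int m/2^i})"
  by (auto simp: level_hit_def indicator_def fun_eq_iff) (metis diff_less_eq)

lemma level_hit_measurable[measurable]: "level_hit i l \<in> borel_measurable borel"
proof -
  have "(\<Union>m::int. {real_of_int m/2^i - l <..< real_of_int m/2^i}) \<in> sets borel"
    by (rule borel_open) auto
  then show ?thesis unfolding level_hit_indicator by simp
qed

lemma penalty_measurable[measurable]: "penalty l \<in> borel_measurable borel"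
  unfolding penalty_def by measurable

text \<open>A level-j dyadic point in the interval is a level-i dyadic point for every i \<ge> j, so the
  interval is hit at all levels j..K.\<close>
lemma level_count_bound:
  assumes m: "u < real_of_int m / 2^j" "real_of_int m / 2^j < u + l" and jle: "j \<le> Suc K"
  shows "real K - real j \<le> (\<Sum>i\<le>K. level_hit i l u)"
proof -
  have hit: "level_hit i l u = 1" if ji: "j \<le> i" for i
  proof -
    define d where "d = i - j"
    have pw: "(2::real)^i = 2^j * 2^d" unfolding d_def using ji by (simp add: power_add[symmetric])
    have "real_of_int (m * 2^d) / 2^i = real_of_int m / 2^j" unfolding pw by simp
    then show ?thesis unfolding level_hit_def using m by (metis (no_types, lifting))
  qed
  have "(\<Sum>i\<in>{j..K}. level_hit i l u) \<le> (\<Sum>i\<le>K. level_hit i l u)"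
    by (rule sum_mono2) (auto simp: level_hit_nonneg)
  moreover have "(\<Sum>i\<in>{j..K}. level_hit i l u) = real (Suc K - j)" using hit by simp
  moreover have "real K - real j \<le> real (Suc K - j)" using jle by linarith
  ultimately show ?thesis by linarith
qed

text \<open>Arithmetic core of the depth estimate: a piece of length a \<le> 2^-i of an interval of length
  l > 2^-(K+1) satisfies a (i - K) \<le> l, because d 2^-d \<le> 1/2 for d \<ge> 1.\<close>
lemma two_pow_ge: "1 \<le> d \<Longrightarrow> 2 * d \<le> (2::nat)^d"
proof (induction d)
  case (Suc d)
  show ?case
  proof (cases "d = 0")
    case False
    then have "2 * d \<le> 2^d" using Suc by simp
    moreover have "(2::nat)^1 \<le> 2^d" using False by (intro power_increasing) auto
    ultimately show ?thesis by simp
  qed simp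
qed simp

lemma depth_excess_bound:
  fixes a l :: real
  assumes "0 < a" "a \<le> 1/2^i" "1/2^(Suc k) < l"
  shows "a * (real i - real k) \<le> l"
proof (cases "i \<le> k")
  case True
  then have "a * (real i - real k) \<le> 0" using assms(1) by (simp add: mult_nonneg_nonpos)
  moreover have "0 < l" using assms(3) by (smt (verit) divide_pos_pos zero_less_power)
  ultimately show ?thesis by linarith
next
  case False
  define d where "d = i - k"
  have d: "1 \<le> d" "i = k + d" unfolding d_def using False by auto
  have "real (2 * d) \<le> real ((2::nat)^d)" using two_pow_ge[OF d(1)] by linarith
  then have dd: "2 * real d \<le> 2^d" by simp
  have "a * (real i - real k) = a * real d" using d by simp
  also have "\<dots> \<le> (1/2^i) * real d" using mult_right_mono[OF assms(2), of "real d"] by simp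
  also have "\<dots> = real d / (2^k * 2^d)" unfolding d(2) by (simp add: power_add)
  also have "\<dots> \<le> 1 / 2^(Suc k)" using dd by (simp add: divide_simps)
  finally show ?thesis using assms(3) by linarith
qed

text \<open>The bound on one of the two pieces of an interval, in the form used to sum them up:
  the average A of the level-j neighbour exceeds the common parent value \<Lambda> by at most C.\<close>
lemma piece_bound:
  fixes a l A \<Lambda> C I :: real
  assumes piece: "I \<le> a * (A + real (i - j) * C + C)" and parent: "A \<le> \<Lambda> + C"
    and ij: "j \<le> i" and a: "0 < a" "a \<le> 1/2^i" and l: "1/2^(Suc K) < l" and C: "0 \<le> C"
  shows "I \<le> a * \<Lambda> + C * (l + a * (real K - real j + 2))"
proof -
  have "A + real (i - j) * C + C \<le> \<Lambda> + C * (real i - real j + 2)"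
    using parent ij by (simp add: algebra_simps)
  then have "I \<le> a * (\<Lambda> + C * (real i - real j + 2))"
    using piece a by (meson mult_left_mono less_imp_le order_trans)
  also have "\<dots> = a * \<Lambda> + C * (a * (real i - real K) + a * (real K - real j + 2))"
    by (simp add: algebra_simps)
  also have "\<dots> \<le> a * \<Lambda> + C * (l + a * (real K - real j + 2))"
    using depth_excess_bound[OF a l] C by (simp add: mult_left_mono)
  finally show ?thesis .
qed

section \<open>The penalty is bounded on average over translations\<close>

lemma integrable_bounded_on_unit:
  fixes h :: "real \<Rightarrow> real"
  assumes "h \<in> borel_measurable borel" "\<And>t. t \<in> {0..1} \<Longrightarrow> \<bar>h t\<bar> \<le> B"
  shows "integrable lborel (\<lambda>t. indicator {0..1} t * h t)"
proof -
  have "integrable lborel (\<lambda>t. B * indicator {0..1::real} t)"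
    by (intro integrable_mult_right integrable_real_indicator) auto
  then show ?thesis
    by (rule Bochner_Integration.integrable_bound)
      (use assms in \<open>auto simp: indicator_def intro: order_trans[OF _ abs_ge_self]\<close>)
qed

text \<open>For t \<in> [0,1], the translate [a+t, a+t+l) contains a level-i point m/2^i only for one of
  the 2^(i+1) indices m following a 2^i, and only if t lies in an interval of length l.\<close>
lemma level_hit_cover:
  fixes a t :: real and i :: nat
  assumes l: "0 < l" "l \<le> 1"
  defines "M \<equiv> {\<lfloor>a * 2^i\<rfloor> + 1 .. \<lfloor>a * 2^i\<rfloor> + 2^(Suc i)}"
    and "J \<equiv> \<lambda>m::int. {real_of_int m / 2^i - l - a <..< real_of_int m / 2^i - a}"
  shows "indicator {0..1} t * level_hit i l (a + t) \<le> (\<Sum>m\<in>M. indicator (J m) t)"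
proof (cases "t \<in> {0..1} \<and> level_hit i l (a + t) = 1")
  case True
  then obtain m :: int where m: "a + t < real_of_int m / 2^i" "real_of_int m / 2^i < a + t + l"
    unfolding level_hit_def by (auto split: if_splits)
  have t: "0 \<le> t" "t \<le> 1" using True by auto
  have "(a + t) * 2^i < real_of_int m" using m(1) by (simp add: divide_simps)
  moreover have "a * 2^i \<le> (a + t) * 2^i" using t by (intro mult_right_mono) auto
  ultimately have m1: "\<lfloor>a * 2^i\<rfloor> + 1 \<le> m" by linarith
  have "real_of_int m < (a + t + l) * 2^i" using m(2) by (simp add: divide_simps)
  also have "\<dots> \<le> (a + 2) * 2^i" using t l by (intro mult_right_mono) auto
  finally have "real_of_int m < a * 2^i + 2^(Suc i)" by (simp add: algebra_simps)
  then have "real_of_int m < real_of_int (\<lfloor>a * 2^i\<rfloor> + 2^(Suc i) + 1)" by simp linarith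
  then have m2: "m \<le> \<lfloor>a * 2^i\<rfloor> + 2^(Suc i)" by (simp only: of_int_less_iff)
  have "t \<in> J m" unfolding J_def using m by auto
  then have "1 \<le> (indicator (J m) t :: real)" by simp
  also have "\<dots> \<le> (\<Sum>m\<in>M. indicator (J m) t)"
    by (rule member_le_sum) (use m1 m2 in \<open>auto simp: M_def\<close>)
  finally show ?thesis using True by simp
next
  case False
  then have "indicator {0..1} t * level_hit i l (a + t) = 0"
    unfolding level_hit_def by (auto simp: indicator_def split: if_splits)
  moreover have "0 \<le> (\<Sum>m\<in>M. indicator (J m) t :: real)" by (auto intro!: sum_nonneg)
  ultimately show ?thesis by linarith
qed

lemma level_hit_average:
  assumes l: "0 < l" "l \<le> 1"
  shows "(\<integral>t. indicator {0..1} t * level_hit i l (a + t) \<partial>lborel) \<le> 2^(Suc i) * l"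
proof -
  define M where "M = {\<lfloor>a * 2^i\<rfloor> + 1 .. \<lfloor>a * 2^i\<rfloor> + 2^(Suc i)}"
  define J where "J m = {real_of_int m / 2^i - l - a <..< real_of_int m / 2^i - a}" for m :: int
  have intJ: "integrable lborel (indicator (J m) :: real \<Rightarrow> real)" for m
    unfolding J_def by (intro integrable_real_indicator) (use l in auto)
  have "(\<integral>t. indicator {0..1} t * level_hit i l (a + t) \<partial>lborel) \<le> (\<integral>t. (\<Sum>m\<in>M. indicator (J m) t) \<partial>lborel)"
  proof (rule integral_mono)
    show "integrable lborel (\<lambda>t. indicator {0..1} t * level_hit i l (a + t))"
      by (rule integrable_bounded_on_unit[where B=1])
        (simp_all add: level_hit_le1 level_hit_nonneg)
  qed (use intJ level_hit_cover[OF l] in \<open>auto simp: M_def J_def\<close>)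
  also have "\<dots> = (\<Sum>m\<in>M. l)"
    by (subst Bochner_Integration.integral_sum[OF intJ]) (use l in \<open>auto simp: J_def\<close>)
  also have "\<dots> = 2^(Suc i) * l"
    unfolding M_def by (simp add: nat_power_eq)
  finally show ?thesis .
qed

text \<open>Summing over the levels i \<le> K(l): the average penalty is at most 5 + 2^(K+2) l \<le> 9.\<close>
lemma penalty_average:
  assumes l: "0 < l" "l \<le> 1"
  shows "integrable lborel (\<lambda>t. indicator {0..1} t * penalty l (a + t))"
    "(\<integral>t. indicator {0..1} t * penalty l (a + t) \<partial>lborel) \<le> 9"
proof -
  have hit_int: "integrable lborel (\<lambda>t. indicator {0..1} t * level_hit i l (a + t))" for i
    by (rule integrable_bounded_on_unit[where B=1])
      (simp_all add: level_hit_le1 level_hit_nonneg)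
  have const_int: "integrable lborel (\<lambda>t. indicator {0..1::real} t * (5::real))"
    by (intro integrable_mult_left integrable_real_indicator) auto
  have eq: "(\<lambda>t. indicator {0..1} t * penalty l (a + t)) =
     (\<lambda>t. indicator {0..1::real} t * (5::real) + (\<Sum>i\<le>coarse_level l. indicator {0..1} t * level_hit i l (a + t)))"
    unfolding penalty_def by (auto simp: fun_eq_iff distrib_left sum_distrib_left)
  show "integrable lborel (\<lambda>t. indicator {0..1} t * penalty l (a + t))"
    unfolding eq by (intro Bochner_Integration.integrable_add const_int Bochner_Integration.integrable_sum hit_int)
  have geo: "(\<Sum>i\<le>k. (2::real)^(Suc i)) = 2^(Suc (Suc k)) - 2" for k
    by (induction k) auto
  have "(\<integral>t. indicator {0..1} t * penalty l (a + t) \<partial>lborel)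
     = 5 + (\<Sum>i\<le>coarse_level l. (\<integral>t. indicator {0..1} t * level_hit i l (a + t) \<partial>lborel))"
    unfolding eq
    by (subst Bochner_Integration.integral_add[OF const_int Bochner_Integration.integrable_sum[OF hit_int]],
        subst Bochner_Integration.integral_sum[OF hit_int]) simp
  also have "\<dots> \<le> 5 + (\<Sum>i\<le>coarse_level l. 2^(Suc i) * l)"
    using level_hit_average[OF l] by (intro add_left_mono sum_mono) auto
  also have "(\<Sum>i\<le>coarse_level l. 2^(Suc i) * l) = (2^(Suc (Suc (coarse_level l))) - 2) * l"
    by (subst sum_distrib_right[symmetric], subst geo, rule refl)
  also have "\<dots> \<le> 4 * (2^coarse_level l * l)"
    using l by (simp add: algebra_simps)
  also have "2^coarse_level l * l \<le> 1"
    using coarse_level(2)[OF l] by (simp add: divide_simps mult.commute)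
  finally show "(\<integral>t. indicator {0..1} t * penalty l (a + t) \<partial>lborel) \<le> 9" by simp
qed

section \<open>One periodic function with a dyadic lower oscillation bound\<close>

locale dyadic_lower_osc =
  fixes f :: "real \<Rightarrow> real" and C :: real
  assumes meas[measurable]: "f \<in> borel_measurable borel"
  and periodic: "\<And>y. f (y + 1) = f y"
  and integrable_unit: "set_integrable lborel {0..<1} f"
  and mean_zero: "(LINT y:{0..<1}|lborel. f y) = 0"
  and C_nonneg: "0 \<le> C"
  and dyadic_bound_unit: "\<And>k (j::nat). j < 2^k \<Longrightarrow>
      AE y in lborel. y \<in> dyadic_ivl k (int j) \<longrightarrow> avg f (dyadic_ivl k (int j)) - C \<le> f y"
begin

lemma periodic_nat: "f (y + real n) = f y"
proof (induction n arbitrary: y)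
  case (Suc n)
  have "f (y + real (Suc n)) = f ((y + real n) + 1)" by (simp add: algebra_simps)
  then show ?case using periodic Suc by simp
qed simp

lemma periodic_int: "f (y + real_of_int n) = f y"
proof (cases "n \<ge> 0")
  case True
  then show ?thesis using periodic_nat[of y "nat n"] by simp
next
  case False
  define k where "k = nat (- n)"
  have k: "real_of_int n = - real k" using False unfolding k_def by simp
  have "f (y + real_of_int n) = f ((y + real_of_int n) + real k)" by (simp add: periodic_nat)
  also have "\<dots> = f y" using k by simp
  finally show ?thesis .
qed

lemma integrable_unit_shift: "set_integrable lborel {real_of_int n..<real_of_int n + 1} f"
proof -
  have "set_integrable lborel {0 + real_of_int n..<1 + real_of_int n} f"
    unfolding shift_set_integrable using integrable_unit by (simp add: periodic_int)
  then show ?thesis by (simp add: add.commute)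
qed

lemma integrable_block: "set_integrable lborel {real_of_int n..<real_of_int n + real N} f"
proof (induction N)
  case 0 then show ?case by (simp add: set_integrable_def)
next
  case (Suc N)
  have eq: "{real_of_int n..<real_of_int n + real (Suc N)} =
     {real_of_int n..<real_of_int n + real N} \<union> {real_of_int (n + int N)..<real_of_int (n + int N) + 1}"
    by (auto simp: algebra_simps)
  show ?case unfolding eq by (rule set_integrable_Un[OF Suc integrable_unit_shift]) simp_all
qed

lemma integrable_Ico: "set_integrable lborel {a..<b} f"
proof -
  define n where "n = \<lfloor>a\<rfloor>"
  define N where "N = nat \<lceil>b - real_of_int n\<rceil>"
  have "{a..<b} \<subseteq> {real_of_int n..<real_of_int n + real N}"
    unfolding n_def N_def by auto linarith+
  then show ?thesis using set_integrable_subset[OF integrable_block] by auto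
qed

lemma integrable_Ico_abs: "set_integrable lborel {a..<b} (\<lambda>x. \<bar>f x\<bar>)"
  using set_integrable_abs[OF integrable_Ico] .

lemma integral_dyadic_ivl: "(LINT y:dyadic_ivl k m|lborel. f y) = avg f (dyadic_ivl k m) / 2^k"
  unfolding avg_def measure_dyadic_ivl by simp

lemma integral_unit_shift: "(LINT y:{real_of_int n..<real_of_int n + 1}|lborel. f y) = 0"
proof -
  have "(LINT y:{0 + real_of_int n..<1 + real_of_int n}|lborel. f y) = 0"
    unfolding shift_set_integral using mean_zero by (simp add: periodic_int)
  then show ?thesis by (simp add: add.commute)
qed

lemma avg_level0: "avg f (dyadic_ivl 0 m) = 0"
  unfolding avg_def dyadic_ivl_def using integral_unit_shift[of m] by simp

lemma avg_dyadic_ivl_shift: "avg f (dyadic_ivl k (m + 2^k * n)) = avg f (dyadic_ivl k m)"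
proof -
  have "(LINT y:dyadic_ivl k (m + 2^k * n)|lborel. f y) = (LINT y:dyadic_ivl k m|lborel. f y)"
    unfolding dyadic_ivl_shift shift_set_integral by (simp add: periodic_int dyadic_ivl_def)
  then show ?thesis unfolding avg_def measure_dyadic_ivl by simp
qed

lemma dyadic_bound: "AE y in lborel. y \<in> dyadic_ivl k m \<longrightarrow> avg f (dyadic_ivl k m) - C \<le> f y"
proof -
  define m0 where "m0 = m mod 2^k"
  define n where "n = m div 2^k"
  have m: "m = m0 + 2^k * n" unfolding m0_def n_def by simp
  have "0 \<le> m0" "m0 < 2^k" unfolding m0_def by simp_all
  then obtain j where j: "m0 = int j" "j < 2^k"
    by (metis nonneg_eq_int of_nat_less_iff of_nat_numeral of_nat_power)
  have "AE y in lborel. y \<in> dyadic_ivl k m0 \<longrightarrow> avg f (dyadic_ivl k m0) - C \<le> f y"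
    using dyadic_bound_unit[OF j(2)] j(1) by simp
  then have "AE x in lborel. x \<in> {real_of_int m0 / 2^k + real_of_int n ..< (real_of_int m0 + 1) / 2^k + real_of_int n}
      \<longrightarrow> avg f (dyadic_ivl k m0) - C \<le> f (x + - real_of_int n)"
    by (intro shift_set_AE) (simp_all add: dyadic_ivl_def)
  then show ?thesis unfolding m avg_dyadic_ivl_shift unfolding dyadic_ivl_shift
    using periodic_int[of _ "-n"] by simp
qed

text \<open>If f \<ge> f_I - C a.e.\ on I, each half of I has average at most f_I + C: the other half
  carries at least half of the mass of f_I - C.\<close>
lemma half_avg_le:
  assumes ab: "a < b"
    and ae: "AE y in lborel. y \<in> {a..<b} \<longrightarrow> avg f {a..<b} - C \<le> f y"
  shows "avg f {a..<(a+b)/2} \<le> avg f {a..<b} + C \<and> avg f {(a+b)/2..<b} \<le> avg f {a..<b} + C"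
proof -
  define m where "m = (a+b)/2"
  define I where "I = (LINT y:{a..<b}|lborel. f y)"
  define I1 where "I1 = (LINT y:{a..<m}|lborel. f y)"
  define I2 where "I2 = (LINT y:{m..<b}|lborel. f y)"
  have am: "a < m" "m < b" using ab unfolding m_def by auto
  have split: "I = I1 + I2" unfolding I_def I1_def I2_def
    by (rule Ico_split_integral) (use am in \<open>auto intro: integrable_Ico\<close>)
  have avg: "avg f {a..<b} = I / (b - a)" using avg_Ico[OF ab] I_def by simp
  have h: "m - a = (b - a) / 2" "b - m = (b - a)/2" unfolding m_def by (simp_all add: field_simps)
  have hh: "(b - a) / 2 * (I / (b - a)) = I / 2" using ab by (simp add: field_simps)
  have "(b - m) * (I / (b - a) - C) \<le> I2" unfolding I2_def
    by (rule set_integral_ge_const[OF integrable_Ico])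
      (use am AE_on_subset[OF ae, of "{m..<b}"] avg in auto)
  then have lb2: "I / 2 - (b - a) / 2 * C \<le> I2" unfolding h(2) right_diff_distrib hh .
  have "(m - a) * (I / (b - a) - C) \<le> I1" unfolding I1_def
    by (rule set_integral_ge_const[OF integrable_Ico])
      (use am AE_on_subset[OF ae, of "{a..<m}"] avg in auto)
  then have lb1: "I / 2 - (b - a) / 2 * C \<le> I1" unfolding h(1) right_diff_distrib hh .
  have a1: "avg f {a..<m} = I1 / (m - a)" using avg_Ico[OF am(1)] I1_def by simp
  have a2: "avg f {m..<b} = I2 / (b - m)" using avg_Ico[OF am(2)] I2_def by simp
  have "I1 \<le> (m - a) * (I / (b - a) + C)"
    unfolding h(1) distrib_left hh using lb2 split by linarith
  then have "I1 / (m - a) \<le> I / (b - a) + C" using am by (simp add: divide_simps mult.commute)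
  moreover have "I2 \<le> (b - m) * (I / (b - a) + C)"
    unfolding h(2) distrib_left hh using lb1 split by linarith
  then have "I2 / (b - m) \<le> I / (b - a) + C" using am by (simp add: divide_simps mult.commute)
  ultimately show ?thesis using a1 a2 avg unfolding m_def by simp
qed

lemma child_avg_le: "avg f (dyadic_ivl (Suc k) m') \<le> avg f (dyadic_ivl k (m' div 2)) + C"
proof -
  define q where "q = m' div 2"
  define a where "a = real_of_int q / 2^k"
  define b where "b = (real_of_int q + 1) / 2^k"
  have ab: "a < b" unfolding a_def b_def by (simp add: divide_strict_right_mono)
  have dq: "dyadic_ivl k q = {a..<b}" unfolding dyadic_ivl_def a_def b_def ..
  have c: "avg f {a..<(a+b)/2} \<le> avg f {a..<b} + C \<and> avg f {(a+b)/2..<b} \<le> avg f {a..<b} + C"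
    by (rule half_avg_le[OF ab dyadic_bound[of k q, unfolded dq]])
  have "m' = 2 * q \<or> m' = 2 * q + 1" unfolding q_def by auto
  then show ?thesis
  proof
    assume m: "m' = 2 * q"
    have e1: "real_of_int m' / 2^(Suc k) = a" unfolding a_def m by (simp add: field_simps)
    have e2: "(real_of_int m' + 1) / 2^(Suc k) = (a+b)/2" unfolding a_def b_def m by (simp add: field_simps)
    have "dyadic_ivl (Suc k) m' = {a..<(a+b)/2}" unfolding dyadic_ivl_def e1 e2 ..
    then show ?thesis using c dq q_def by simp
  next
    assume m: "m' = 2 * q + 1"
    have e1: "real_of_int m' / 2^(Suc k) = (a+b)/2" unfolding a_def b_def m by (simp add: field_simps)
    have e2: "(real_of_int m' + 1) / 2^(Suc k) = b" unfolding b_def m by (simp add: field_simps)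
    have "dyadic_ivl (Suc k) m' = {(a+b)/2..<b}" unfolding dyadic_ivl_def e1 e2 ..
    then show ?thesis using c dq q_def by simp
  qed
qed

lemma descendant_avg_le: "avg f (dyadic_ivl (k + n) m') \<le> avg f (dyadic_ivl k (m' div 2^n)) + real n * C"
proof (induction n arbitrary: m')
  case (Suc n)
  have "avg f (dyadic_ivl (k + Suc n) m') \<le> avg f (dyadic_ivl (k + n) (m' div 2)) + C"
    using child_avg_le[of "k + n" m'] by simp
  also have "\<dots> \<le> avg f (dyadic_ivl k ((m' div 2) div 2^n)) + real n * C + C"
    using Suc.IH[of "m' div 2"] by simp
  also have "(m' div 2) div 2^n = m' div 2^(Suc n)"
    by (simp add: zdiv_zmult2_eq)
  finally show ?case by (simp add: algebra_simps)
qed simp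

text \<open>Mean zero and f \<ge> -C on [0,1) give the L^1 bound 2C per period, hence 4C on any interval
  of length at most 1.\<close>
lemma L1_unit_shift: "(LINT y:{real_of_int n..<real_of_int n + 1}|lborel. \<bar>f y\<bar>) \<le> 2 * C"
proof -
  have lb: "AE y in lborel. y \<in> {0..<1} \<longrightarrow> - C \<le> f y"
    using dyadic_bound[of 0 0] avg_level0[of 0] unfolding dyadic_ivl_def by simp
  have "(LINT y:{0..<1}|lborel. \<bar>f y\<bar>) \<le> (LINT y:{0..<1}|lborel. f y + 2 * C)"
    by (rule set_integral_mono_AE[OF integrable_Ico_abs
          set_integral_add(1)[OF integrable_Ico]])
      (use lb C_nonneg in \<open>auto simp: set_integrable_def\<close>)
  also have "\<dots> = 2 * C"
    by (subst set_integral_add(2)[OF integrable_Ico])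
      (simp_all add: set_integrable_def mean_zero set_integral_const)
  finally have "(LINT y:{0 + real_of_int n..<1 + real_of_int n}|lborel. \<bar>f y\<bar>) \<le> 2 * C"
    unfolding shift_set_integral by (simp add: periodic_int)
  then show ?thesis by (simp add: add.commute)
qed

lemma L1_bound:
  assumes "0 \<le> l" "l \<le> 1"
  shows "(LINT y:{u..<u+l}|lborel. \<bar>f y\<bar>) \<le> 4 * C"
proof -
  define n where "n = \<lfloor>u\<rfloor>"
  have n: "real_of_int n \<le> u" "u < real_of_int n + 1" unfolding n_def by linarith+
  define L where "L a b = (LINT y:{a..<b}|lborel. \<bar>f y\<bar>)" for a b
  have split: "L a c = L a b + L b c" if "a \<le> b" "b \<le> c" for a b c
    unfolding L_def by (rule Ico_split_integral[OF that integrable_Ico_abs integrable_Ico_abs])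
  have nonneg: "0 \<le> L a b" for a b
    unfolding L_def set_lebesgue_integral_def by (auto intro!: integral_nonneg simp: indicator_def)
  have "L (real_of_int n) (real_of_int n + 2)
      = L (real_of_int n) (real_of_int n + 1) + L (real_of_int (n+1)) (real_of_int (n+1) + 1)"
    using split[of "real_of_int n" "real_of_int n + 1" "real_of_int n + 2"] by (simp add: add.assoc)
  then have "L (real_of_int n) (real_of_int n + 2) \<le> 4 * C"
    using L1_unit_shift[of n] L1_unit_shift[of "n+1"] unfolding L_def by simp
  moreover have "L (real_of_int n) (real_of_int n + 2)
     = L (real_of_int n) u + (L u (u+l) + L (u+l) (real_of_int n + 2))"
    using split[of "real_of_int n" u "real_of_int n + 2"] split[of u "u+l" "real_of_int n + 2"] n assms
    by simp
  ultimately show ?thesis using nonneg[of "real_of_int n" u] nonneg[of "u+l" "real_of_int n + 2"]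
    unfolding L_def by linarith
qed

lemma common_parent:
  assumes "j = 0 \<or> odd m"
  obtains \<Lambda> where
    "AE y in lborel. y \<in> {(real_of_int m - 1)/2^j ..< (real_of_int m + 1)/2^j} \<longrightarrow> \<Lambda> - C \<le> f y"
    "avg f (dyadic_ivl j (m-1)) \<le> \<Lambda> + C" "avg f (dyadic_ivl j m) \<le> \<Lambda> + C"
proof (cases j)
  case 0
  have "AE y in lborel. y \<in> dyadic_ivl 0 (m-1) \<longrightarrow> 0 - C \<le> f y"
    "AE y in lborel. y \<in> dyadic_ivl 0 m \<longrightarrow> 0 - C \<le> f y"
    using dyadic_bound[of 0 "m-1"] dyadic_bound[of 0 m] avg_level0 by simp_all
  then have "AE y in lborel. y \<in> {(real_of_int m - 1)/2^j ..< (real_of_int m + 1)/2^j} \<longrightarrow> 0 - C \<le> f y"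
    unfolding 0 dyadic_ivl_def by eventually_elim auto
  then show ?thesis using that[of 0] avg_level0 C_nonneg 0 by simp
next
  case (Suc j')
  then obtain q where m: "m = 2 * q + 1" using assms by (metis oddE nat.simps(3))
  have e1: "real_of_int q / 2^j' = (real_of_int m - 1)/2^j" unfolding m Suc by (simp add: field_simps)
  have e2: "(real_of_int q + 1) / 2^j' = (real_of_int m + 1)/2^j" unfolding m Suc by (simp add: field_simps)
  show ?thesis
  proof (rule that[of "avg f (dyadic_ivl j' q)"])
    show "AE y in lborel. y \<in> {(real_of_int m - 1)/2^j ..< (real_of_int m + 1)/2^j}
        \<longrightarrow> avg f (dyadic_ivl j' q) - C \<le> f y"
      using dyadic_bound[of j' q] unfolding dyadic_ivl_def e1 e2 .
    show "avg f (dyadic_ivl j (m-1)) \<le> avg f (dyadic_ivl j' q) + C"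
      using child_avg_le[of j' "m-1"] unfolding Suc m by simp
    show "avg f (dyadic_ivl j m) \<le> avg f (dyadic_ivl j' q) + C"
      using child_avg_le[of j' "m"] unfolding Suc m by simp
  qed
qed

text \<open>The piece [u, p) of length a \<le> 2^-j left of p = m/2^j: with 2^-(i+1) < a \<le> 2^-i, the
  level-i interval ending at p contains it; f is bounded below on that interval, so the
  complementary part of it cannot carry much mass, and its average is controlled by the
  ancestor at level j via the descendant estimate.\<close>
lemma left_piece:
  assumes "real_of_int m / 2^j - 1/2^j \<le> u" "u < real_of_int m / 2^j"
  obtains i where "i \<ge> j" "real_of_int m / 2^j - u \<le> 1/2^i"
    "(LINT y:{u..<real_of_int m / 2^j}|lborel. f y)
       \<le> (real_of_int m / 2^j - u) * (avg f (dyadic_ivl j (m-1)) + real (i-j) * C + C)"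
proof -
  define p where "p = real_of_int m / 2^j"
  define a where "a = p - u"
  have a0: "0 < a" "a \<le> 1/2^j" using assms unfolding a_def p_def by auto
  obtain i where i: "j \<le> i" "1/2^(Suc i) < a" "a \<le> 1/2^i" using exist_level[OF a0] by blast
  define d where "d = i - j"
  define s where "s = (1::real)/2^i"
  have ijd: "i = j + d" unfolding d_def using i by simp
  have pw: "(2::real)^i = 2^j * 2^d" unfolding ijd by (simp add: power_add)
  have IA: "dyadic_ivl i (m * 2^d - 1) = {p - s..<p}"
    unfolding dyadic_ivl_def p_def s_def pw by (simp add: field_simps)
  define v where "v = avg f (dyadic_ivl i (m * 2^d - 1))"
  have "(m * 2^d - 1) div 2^d = m - 1"
  proof -
    have e: "m * 2^d - 1 = (2^d - 1) + (m - 1) * 2^d" by (simp add: algebra_simps)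
    have "(2^d - 1::int) div 2^d = 0" by (rule div_pos_pos_trivial) simp_all
    then show ?thesis unfolding e by simp
  qed
  then have vch: "v \<le> avg f (dyadic_ivl j (m-1)) + real d * C"
    using descendant_avg_le[of j d "m * 2^d - 1"] unfolding v_def ijd[symmetric] by simp
  have ae: "AE y in lborel. y \<in> {p - s..<p} \<longrightarrow> v - C \<le> f y"
    using dyadic_bound[of i "m * 2^d - 1"] unfolding IA v_def .
  have sa: "p - s \<le> u" "s < 2 * a" using i unfolding s_def a_def by (auto simp: field_simps)
  have tot: "(LINT y:{p - s..<p}|lborel. f y) = s * v"
    using integral_dyadic_ivl[of i "m * 2^d - 1"] unfolding IA v_def s_def by simp
  have spl: "(LINT y:{p - s..<p}|lborel. f y) = (LINT y:{p - s..<u}|lborel. f y) + (LINT y:{u..<p}|lborel. f y)"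
    by (rule Ico_split_integral[OF _ _ integrable_Ico integrable_Ico]) (use sa a0 a_def in auto)
  have lb: "(u - (p - s)) * (v - C) \<le> (LINT y:{p - s..<u}|lborel. f y)"
    by (rule set_integral_ge_const[OF integrable_Ico])
      (use sa AE_on_subset[OF ae, of "{p-s..<u}"] a0 a_def in auto)
  have "(LINT y:{u..<p}|lborel. f y) \<le> s * v - (u - (p - s)) * (v - C)"
    using tot spl lb by linarith
  also have "\<dots> = a * v + (s - a) * C" unfolding a_def by (simp add: algebra_simps)
  also have "\<dots> \<le> a * v + a * C" using sa C_nonneg by (simp add: mult_right_mono)
  also have "\<dots> \<le> a * (avg f (dyadic_ivl j (m-1)) + real d * C + C)"
    using mult_left_mono[OF vch, of a] a0 by (simp add: distrib_left)
  finally show ?thesis using that i unfolding a_def p_def d_def by blast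
qed

lemma right_piece:
  assumes "real_of_int m / 2^j < w" "w \<le> real_of_int m / 2^j + 1/2^j"
  obtains i where "i \<ge> j" "w - real_of_int m / 2^j \<le> 1/2^i"
    "(LINT y:{real_of_int m / 2^j..<w}|lborel. f y)
       \<le> (w - real_of_int m / 2^j) * (avg f (dyadic_ivl j m) + real (i-j) * C + C)"
proof -
  define p where "p = real_of_int m / 2^j"
  define b where "b = w - p"
  have b0: "0 < b" "b \<le> 1/2^j" using assms unfolding b_def p_def by auto
  obtain i where i: "j \<le> i" "1/2^(Suc i) < b" "b \<le> 1/2^i" using exist_level[OF b0] by blast
  define d where "d = i - j"
  define s where "s = (1::real)/2^i"
  have ijd: "i = j + d" unfolding d_def using i by simp
  have pw: "(2::real)^i = 2^j * 2^d" unfolding ijd by (simp add: power_add)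
  have IB: "dyadic_ivl i (m * 2^d) = {p..<p + s}"
    unfolding dyadic_ivl_def p_def s_def pw by (simp add: field_simps)
  define v where "v = avg f (dyadic_ivl i (m * 2^d))"
  have vch: "v \<le> avg f (dyadic_ivl j m) + real d * C"
    using descendant_avg_le[of j d "m * 2^d"] unfolding v_def ijd[symmetric] by simp
  have ae: "AE y in lborel. y \<in> {p..<p + s} \<longrightarrow> v - C \<le> f y"
    using dyadic_bound[of i "m * 2^d"] unfolding IB v_def .
  have sa: "w \<le> p + s" "s < 2 * b" using i unfolding s_def b_def by (auto simp: field_simps)
  have tot: "(LINT y:{p..<p + s}|lborel. f y) = s * v"
    using integral_dyadic_ivl[of i "m * 2^d"] unfolding IB v_def s_def by simp
  have spl: "(LINT y:{p..<p + s}|lborel. f y) = (LINT y:{p..<w}|lborel. f y) + (LINT y:{w..<p + s}|lborel. f y)"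
    by (rule Ico_split_integral[OF _ _ integrable_Ico integrable_Ico]) (use sa b0 b_def in auto)
  have lb: "(p + s - w) * (v - C) \<le> (LINT y:{w..<p + s}|lborel. f y)"
    by (rule set_integral_ge_const[OF integrable_Ico])
      (use sa AE_on_subset[OF ae, of "{w..<p + s}"] b0 b_def in auto)
  have "(LINT y:{p..<w}|lborel. f y) \<le> s * v - (p + s - w) * (v - C)"
    using tot spl lb by linarith
  also have "\<dots> = b * v + (s - b) * C" unfolding b_def by (simp add: algebra_simps)
  also have "\<dots> \<le> b * v + b * C" using sa C_nonneg by (simp add: mult_right_mono)
  also have "\<dots> \<le> b * (avg f (dyadic_ivl j m) + real d * C + C)"
    using mult_left_mono[OF vch, of b] b0 by (simp add: distrib_left)
  finally show ?thesis using that i unfolding b_def p_def d_def by blast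
qed

text \<open>The key one-sided estimate for an arbitrary interval: f \<ge> f_Q - C H(l,u) a.e.\ on
  Q = [u, u+l).  Both pieces of Q around the coarsest dyadic point are bounded via the common
  parent value \<Lambda>; the depth excess is absorbed by the count of hit levels.\<close>
lemma interval_lower_bound:
  assumes l: "0 < l" "l \<le> 1"
  shows "AE y in lborel. y \<in> {u..<u+l} \<longrightarrow> avg f {u..<u+l} - C * penalty l u \<le> f y"
proof -
  define K where "K = coarse_level l"
  have K: "1/2^(Suc K) < l" using coarse_level(1)[OF l] unfolding K_def .
  obtain j and m :: int where jK: "j \<le> Suc K"
    and m: "u < real_of_int m / 2^j" "real_of_int m / 2^j < u + l"
    and lo: "real_of_int m / 2^j - 1 / 2^j \<le> u" and hi: "u + l \<le> real_of_int m / 2^j + 1 / 2^j"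
    and par: "j = 0 \<or> odd m"
    using coarsest_dyadic_point[OF l, of u] unfolding K_def by blast
  define p where "p = real_of_int m / 2^j"
  define a where "a = p - u"
  define b where "b = u + l - p"
  have ab: "0 < a" "0 < b" "a + b = l" using m unfolding a_def b_def p_def by auto
  have cover: "{u..<u+l} \<subseteq> {(real_of_int m - 1)/2^j ..< (real_of_int m + 1)/2^j}"
    using lo hi by (auto simp: diff_divide_distrib add_divide_distrib)
  obtain \<Lambda> where Lam: "AE y in lborel. y \<in> {(real_of_int m - 1)/2^j ..< (real_of_int m + 1)/2^j} \<longrightarrow> \<Lambda> - C \<le> f y"
    "avg f (dyadic_ivl j (m-1)) \<le> \<Lambda> + C" "avg f (dyadic_ivl j m) \<le> \<Lambda> + C"
    using common_parent[OF par] by blast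
  obtain iA where iA: "iA \<ge> j" "a \<le> 1/2^iA"
    "(LINT y:{u..<p}|lborel. f y) \<le> a * (avg f (dyadic_ivl j (m-1)) + real (iA-j) * C + C)"
    using left_piece[OF lo m(1)] unfolding a_def p_def by blast
  obtain iB where iB: "iB \<ge> j" "b \<le> 1/2^iB"
    "(LINT y:{p..<u+l}|lborel. f y) \<le> b * (avg f (dyadic_ivl j m) + real (iB-j) * C + C)"
    using right_piece[OF m(2)] hi unfolding b_def p_def by (auto simp: add.commute)
  have "(LINT y:{u..<u+l}|lborel. f y) = (LINT y:{u..<p}|lborel. f y) + (LINT y:{p..<u+l}|lborel. f y)"
    by (rule Ico_split_integral[OF _ _ integrable_Ico integrable_Ico]) (use m p_def in auto)
  also have "\<dots> \<le> (a * \<Lambda> + C * (l + a * (real K - real j + 2)))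
                  + (b * \<Lambda> + C * (l + b * (real K - real j + 2)))"
    using piece_bound[OF iA(3) Lam(2) iA(1) ab(1) iA(2) K C_nonneg]
      piece_bound[OF iB(3) Lam(3) iB(1) ab(2) iB(2) K C_nonneg] by linarith
  also have "\<dots> = l * (\<Lambda> + C * (real K - real j + 4))"
    unfolding ab(3)[symmetric] by (simp add: algebra_simps)
  finally have "avg f {u..<u+l} \<le> \<Lambda> + C * (real K - real j + 4)"
    using l by (simp add: avg_Ico divide_simps mult.commute)
  moreover have "C * (real K - real j) \<le> C * (\<Sum>i\<le>K. level_hit i l u)"
    using level_count_bound[OF m jK] C_nonneg by (simp add: mult_left_mono)
  ultimately have "avg f {u..<u+l} - C * penalty l u \<le> \<Lambda> - C"
    unfolding penalty_def K_def[symmetric] by (simp add: algebra_simps)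
  then show ?thesis using AE_on_subset[OF Lam(1) cover] by auto
qed

end

section \<open>The family of translates and Fubini\<close>

text \<open>The hypotheses of the theorem that the proof actually uses: joint measurability,
  integrability and mean zero of every slice.  Unlike admissible_family, this notion is
  closed under negation, which reduces part (b) to part (a).\<close>
definition mean_zero_family :: "(real \<Rightarrow> real \<Rightarrow> real) \<Rightarrow> bool" where
  "mean_zero_family \<phi> \<longleftrightarrow>
     (\<lambda>(t, x). \<phi> t x) \<in> borel_measurable (restrict_space (lborel \<Otimes>\<^sub>M lborel) ({0..1} \<times> {0..<1})) \<and>
     (\<forall>t\<in>{0..1}. set_integrable lborel {0..<1} (\<phi> t) \<and> (LINT x:{0..<1}|lborel. \<phi> t x) = 0)"

definition dyadic_lower_family :: "(real \<Rightarrow> real \<Rightarrow> real) \<Rightarrow> real \<Rightarrow> bool" where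
  "dyadic_lower_family \<phi> C \<longleftrightarrow> (\<forall>t\<in>{0..1}. \<forall>k (j::nat). j < 2^k \<longrightarrow>
     (AE y in lborel. y \<in> dyadic_ivl k (int j) \<longrightarrow> avg (\<phi> t) (dyadic_ivl k (int j)) - C \<le> \<phi> t y))"

lemma admissible_imp_mean_zero: "admissible_family \<phi> \<Longrightarrow> mean_zero_family \<phi>"
  unfolding admissible_family_def mean_zero_family_def by auto

lemma mean_zero_family_uminus:
  assumes "mean_zero_family \<phi>"
  shows "mean_zero_family (\<lambda>t x. - \<phi> t x)"
proof -
  have "(\<lambda>z. - (\<lambda>(t, x). \<phi> t x) z) \<in> borel_measurable (restrict_space (lborel \<Otimes>\<^sub>M lborel) ({0..1} \<times> {0..<1}))"
    using assms unfolding mean_zero_family_def by (intro borel_measurable_uminus) simp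
  then show ?thesis
    using assms unfolding mean_zero_family_def set_integrable_def set_lebesgue_integral_def
    by (simp add: case_prod_beta')
qed

lemma frac_measurable[measurable]: "(frac :: real \<Rightarrow> real) \<in> borel_measurable borel"
  unfolding frac_def by measurable

lemma dyadic_lower_osc_slice:
  assumes fam: "mean_zero_family \<phi>" and dyad: "dyadic_lower_family \<phi> C" and C: "0 \<le> C"
    and t: "t \<in> {0..1}"
  shows "dyadic_lower_osc (\<lambda>y. \<phi> t (frac y)) C"
proof
  have si: "set_integrable lborel {0..<1} (\<phi> t)" and m0: "(LINT x:{0..<1}|lborel. \<phi> t x) = 0"
    using fam t unfolding mean_zero_family_def by auto
  have "(\<lambda>y. (\<lambda>x. indicator {0..<1} x *\<^sub>R \<phi> t x) (frac y)) \<in> borel_measurable borel"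
    using borel_measurable_integrable[OF si[unfolded set_integrable_def]] by measurable
  moreover have "(\<lambda>y. (\<lambda>x. indicator {0..<1} x *\<^sub>R \<phi> t x) (frac y)) = (\<lambda>y. \<phi> t (frac y))"
    by (auto simp: fun_eq_iff indicator_def frac_lt_1)
  ultimately show "(\<lambda>y. \<phi> t (frac y)) \<in> borel_measurable borel" by simp
  show "\<And>y. \<phi> t (frac (y + 1)) = \<phi> t (frac y)" by (simp add: frac_1_eq)
  show "set_integrable lborel {0..<1} (\<lambda>y. \<phi> t (frac y))"
    using si by (subst set_integrable_cong[where f'="\<phi> t"]) (auto simp: frac_eq)
  show "(LINT y:{0..<1}|lborel. \<phi> t (frac y)) = 0"
    using m0 by (subst set_lebesgue_integral_cong[where g="\<phi> t"]) (auto simp: frac_eq)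
  show "0 \<le> C" by fact
  fix k and j :: nat assume j: "j < 2^k"
  have eqf: "\<And>y. y \<in> dyadic_ivl k (int j) \<Longrightarrow> \<phi> t (frac y) = \<phi> t y"
    using dyadic_ivl_subset_unit[OF j] by (auto simp: frac_eq)
  have "avg (\<lambda>y. \<phi> t (frac y)) (dyadic_ivl k (int j)) = avg (\<phi> t) (dyadic_ivl k (int j))"
    unfolding avg_def using eqf by (subst set_lebesgue_integral_cong[where g="\<phi> t"]) (auto simp: dyadic_ivl_def)
  then show "AE y in lborel. y \<in> dyadic_ivl k (int j) \<longrightarrow>
      avg (\<lambda>y. \<phi> t (frac y)) (dyadic_ivl k (int j)) - C \<le> \<phi> t (frac y)"
    using dyad t j eqf unfolding dyadic_lower_family_def by auto
qed

definition phi_ext :: "(real \<Rightarrow> real \<Rightarrow> real) \<Rightarrow> real \<Rightarrow> real \<Rightarrow> real" where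
  "phi_ext \<phi> t y = (if t \<in> {0..1} then \<phi> t (frac y) else 0)"

lemma phi_ext_measurable:
  assumes "mean_zero_family \<phi>"
  shows "(\<lambda>(t, y). phi_ext \<phi> t y) \<in> borel_measurable (lborel \<Otimes>\<^sub>M lborel)"
proof -
  define H where "H z = (if z \<in> {0..1::real} \<times> {0..<1::real} then (\<lambda>(t, x). \<phi> t x) z else 0)" for z
  have "H \<in> borel_measurable (lborel \<Otimes>\<^sub>M lborel)"
    using assms unfolding mean_zero_family_def H_def
    by (subst (asm) measurable_restrict_space_iff) auto
  moreover have "(\<lambda>z. (fst z, frac (snd z))) \<in> (lborel \<Otimes>\<^sub>M lborel) \<rightarrow>\<^sub>M (lborel \<Otimes>\<^sub>M lborel :: (real \<times> real) measure)"
    by measurable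
  ultimately have "(\<lambda>z. H (fst z, frac (snd z))) \<in> borel_measurable (lborel \<Otimes>\<^sub>M lborel)"
    by (rule measurable_compose[rotated])
  moreover have "(\<lambda>(t, y). phi_ext \<phi> t y) = (\<lambda>z. H (fst z, frac (snd z)))"
    unfolding phi_ext_def H_def by (auto simp: fun_eq_iff frac_lt_1)
  ultimately show ?thesis by simp
qed

lemma averaged_phi_eq: "averaged_phi \<phi> x = (\<integral>t. indicator {0..1} t * phi_ext \<phi> t (x + t) \<partial>lborel)"
  unfolding averaged_phi_def set_lebesgue_integral_def
  by (intro Bochner_Integration.integral_cong) (auto simp: indicator_def phi_ext_def)

lemma averaged_phi_periodic: "averaged_phi \<phi> (x + 1) = averaged_phi \<phi> x"
proof -
  have "frac (x + 1 + t) = frac (x + t)" for t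
    using frac_1_eq[of "x + t"] by (simp add: add_ac)
  then show ?thesis unfolding averaged_phi_def by simp
qed

lemma averaged_phi_uminus: "averaged_phi (\<lambda>t x. - \<phi> t x) = (\<lambda>x. - averaged_phi \<phi> x)"
  unfolding averaged_phi_def set_lebesgue_integral_def by (simp add: fun_eq_iff)

locale averaging =
  fixes \<phi> :: "real \<Rightarrow> real \<Rightarrow> real" and C :: real
  assumes fam: "mean_zero_family \<phi>" and dyad: "dyadic_lower_family \<phi> C" and C_nonneg: "0 \<le> C"
begin

lemma phi_ext_meas[measurable]: "(\<lambda>(t, y). phi_ext \<phi> t y) \<in> borel_measurable (lborel \<Otimes>\<^sub>M lborel)"
  using phi_ext_measurable[OF fam] .

lemma slice: "t \<in> {0..1} \<Longrightarrow> dyadic_lower_osc (\<lambda>y. \<phi> t (frac y)) C"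
  using dyadic_lower_osc_slice[OF fam dyad C_nonneg] .

lemma averaged_phi_measurable[measurable]: "averaged_phi \<phi> \<in> borel_measurable borel"
proof -
  have "(\<lambda>x. \<integral>t. indicator {0..1} t * phi_ext \<phi> t (x + t) \<partial>lborel) \<in> borel_measurable lborel"
    by (intro lborel.borel_measurable_lebesgue_integral) measurable
  then show ?thesis unfolding averaged_phi_eq[abs_def] by simp
qed

definition fubini_integrand :: "real \<Rightarrow> real \<Rightarrow> real \<Rightarrow> real \<Rightarrow> real" where
  "fubini_integrand a l t x = indicator {0..1} t * (indicator {a..<a+l} x * phi_ext \<phi> t (x + t))"

lemma fubini_integrand_measurable[measurable]:
  "(\<lambda>(t, x). fubini_integrand a l t x) \<in> borel_measurable (lborel \<Otimes>\<^sub>M lborel)"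
  unfolding fubini_integrand_def by measurable

lemma fubini_integrand_in:
  "t \<in> {0..1} \<Longrightarrow> fubini_integrand a l t x = indicator {a..<a+l} x * \<phi> t (frac (x + t))"
  unfolding fubini_integrand_def phi_ext_def by simp

lemma fubini_integrand_out: "t \<notin> {0..1} \<Longrightarrow> fubini_integrand a l t x = 0"
  unfolding fubini_integrand_def by simp

definition translate_avg :: "real \<Rightarrow> real \<Rightarrow> real \<Rightarrow> real" where
  "translate_avg a l t = (LINT x:{a..<a+l}|lborel. phi_ext \<phi> t (x + t)) / l"

lemma translate_avg_measurable[measurable]: "translate_avg a l \<in> borel_measurable borel"
proof -
  have "(\<lambda>t. \<integral>x. indicator {a..<a+l} x *\<^sub>R phi_ext \<phi> t (x + t) \<partial>lborel) \<in> borel_measurable lborel"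
    by (intro lborel.borel_measurable_lebesgue_integral) measurable
  then show ?thesis unfolding translate_avg_def set_lebesgue_integral_def by simp
qed

lemma translate_avg_eq:
  assumes t: "t \<in> {0..1}" and l: "0 < l"
  shows "translate_avg a l t = avg (\<lambda>y. \<phi> t (frac y)) {a + t..<a + t + l}"
proof -
  have "(LINT x:{a..<a+l}|lborel. phi_ext \<phi> t (x + t)) = (LINT x:{a..<a+l}|lborel. \<phi> t (frac (x + t)))"
    using t by (simp add: phi_ext_def)
  also have "\<dots> = (LINT y:{a + t..<a + t + l}|lborel. \<phi> t (frac y))"
    using shift_set_integral[of a t "a + l" "\<lambda>y. \<phi> t (frac y)"] by (simp add: add_ac)
  finally show ?thesis unfolding translate_avg_def avg_def using l by simp
qed

lemma translate_avg_bound: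
  assumes t: "t \<in> {0..1}" and l: "0 < l" "l \<le> 1"
  shows "\<bar>translate_avg a l t\<bar> \<le> 4 * C / l"
proof -
  interpret P: dyadic_lower_osc "\<lambda>y. \<phi> t (frac y)" C using slice[OF t] .
  have "\<bar>LINT y:{a + t..<a + t + l}|lborel. \<phi> t (frac y)\<bar> \<le> (LINT y:{a + t..<a + t + l}|lborel. \<bar>\<phi> t (frac y)\<bar>)"
    unfolding set_lebesgue_integral_def
    by (rule order_trans[OF integral_abs_bound]) (simp add: abs_mult)
  also have "\<dots> \<le> 4 * C" by (rule P.L1_bound) (use l in auto)
  finally show ?thesis
    using l translate_avg_eq[OF t l(1), of a] by (simp add: avg_def divide_simps)
qed

lemma fubini_integrand_integrable_x: "integrable lborel (\<lambda>x. fubini_integrand a l t x)"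
proof (cases "t \<in> {0..1}")
  case True
  interpret P: dyadic_lower_osc "\<lambda>y. \<phi> t (frac y)" C using slice[OF True] .
  have "set_integrable lborel {a..<a+l} (\<lambda>x. \<phi> t (frac (x + t)))"
    using P.integrable_Ico[of "a + t" "a + l + t"] unfolding shift_set_integrable .
  then show ?thesis unfolding set_integrable_def using fubini_integrand_in[OF True] by simp
qed (simp add: fubini_integrand_out)

lemma fubini_integrand_L1_bound:
  assumes l: "0 < l" "l \<le> 1"
  shows "(\<integral>x. norm (fubini_integrand a l t x) \<partial>lborel) \<le> 4 * C * indicator {0..1} t"
proof (cases "t \<in> {0..1}")
  case True
  interpret P: dyadic_lower_osc "\<lambda>y. \<phi> t (frac y)" C using slice[OF True] .
  have "(\<integral>x. norm (fubini_integrand a l t x) \<partial>lborel) = (LINT x:{a..<a+l}|lborel. \<bar>\<phi> t (frac (x + t))\<bar>)"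
    unfolding set_lebesgue_integral_def using fubini_integrand_in[OF True]
    by (intro Bochner_Integration.integral_cong) (auto simp: indicator_def)
  also have "\<dots> = (LINT y:{a + t..<a + t + l}|lborel. \<bar>\<phi> t (frac y)\<bar>)"
    using shift_set_integral[of a t "a + l" "\<lambda>y. \<bar>\<phi> t (frac y)\<bar>"] by (simp add: add_ac)
  also have "\<dots> \<le> 4 * C" by (rule P.L1_bound) (use l in auto)
  finally show ?thesis using True by simp
qed (simp add: fubini_integrand_out)

text \<open>Each slice has L^1 norm at most 4 C on Q + t, so the integrand is integrable on the product.\<close>
lemma fubini_integrand_integrable:
  assumes l: "0 < l" "l \<le> 1"
  shows "integrable (lborel \<Otimes>\<^sub>M lborel) (\<lambda>(t, x). fubini_integrand a l t x)"
proof (rule lborel_pair.Fubini_integrable)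
  show "AE t in lborel. integrable lborel (\<lambda>x. (\<lambda>(t, x). fubini_integrand a l t x) (t, x))"
    using fubini_integrand_integrable_x by simp
  have "integrable lborel (\<lambda>t. 4 * C * indicator {0..1::real} t)"
    by (intro integrable_mult_right integrable_real_indicator) auto
  then show "integrable lborel (\<lambda>t. \<integral>x. norm ((\<lambda>(t, x). fubini_integrand a l t x) (t, x)) \<partial>lborel)"
    by (rule Bochner_Integration.integrable_bound)
      (use fubini_integrand_L1_bound[OF l] C_nonneg in \<open>auto simp: indicator_def\<close>)
qed simp

lemma averaged_interval_integral:
  assumes l: "0 < l" "l \<le> 1"
  shows "set_integrable lborel {a..<a+l} (averaged_phi \<phi>)"
    "avg (averaged_phi \<phi>) {a..<a+l} = (\<integral>t. indicator {0..1} t * translate_avg a l t \<partial>lborel)"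
proof -
  have FI: "integrable (lborel \<Otimes>\<^sub>M lborel) (case_prod (fubini_integrand a l))"
    using fubini_integrand_integrable[OF l, of a] by (simp add: case_prod_beta')
  have x_int: "(\<integral>t. fubini_integrand a l t x \<partial>lborel) = indicator {a..<a+l} x * averaged_phi \<phi> x" for x
  proof -
    have "(\<integral>t. fubini_integrand a l t x \<partial>lborel)
        = (\<integral>t. indicator {a..<a+l} x * (indicator {0..1} t * phi_ext \<phi> t (x + t)) \<partial>lborel)"
      unfolding fubini_integrand_def by (simp add: algebra_simps)
    also have "\<dots> = indicator {a..<a+l} x * averaged_phi \<phi> x"
      unfolding averaged_phi_eq by (rule integral_mult_right_zero)
    finally show ?thesis .
  qed
  have t_int: "(\<integral>x. fubini_integrand a l t x \<partial>lborel) = l * (indicator {0..1} t * translate_avg a l t)" for t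
    using l by (cases "t \<in> {0..1}")
      (simp_all add: fubini_integrand_def translate_avg_def set_lebesgue_integral_def)
  have "integrable lborel (\<lambda>x. \<integral>t. fubini_integrand a l t x \<partial>lborel)"
    by (rule lborel_pair.integrable_snd[OF FI])
  then show "set_integrable lborel {a..<a+l} (averaged_phi \<phi>)"
    unfolding set_integrable_def x_int by simp
  have "(LINT x:{a..<a+l}|lborel. averaged_phi \<phi> x) = (\<integral>x. \<integral>t. fubini_integrand a l t x \<partial>lborel \<partial>lborel)"
    unfolding set_lebesgue_integral_def x_int by simp
  also have "\<dots> = (\<integral>t. \<integral>x. fubini_integrand a l t x \<partial>lborel \<partial>lborel)"
    by (rule lborel_pair.Fubini_integral[OF FI])
  also have "\<dots> = l * (\<integral>t. indicator {0..1} t * translate_avg a l t \<partial>lborel)"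
    unfolding t_int by simp
  finally show "avg (averaged_phi \<phi>) {a..<a+l} = (\<integral>t. indicator {0..1} t * translate_avg a l t \<partial>lborel)"
    using l unfolding avg_def by simp
qed

lemma translate_lower_bound:
  assumes l: "0 < l" "l \<le> 1" and t: "t \<in> {0..1}"
  shows "AE x in lborel. x \<in> {a..<a+l} \<longrightarrow>
           translate_avg a l t - C * penalty l (a + t) \<le> phi_ext \<phi> t (x + t)"
proof -
  interpret P: dyadic_lower_osc "\<lambda>y. \<phi> t (frac y)" C using slice[OF t] .
  have "AE y in lborel. y \<in> {a + t..<a + l + t} \<longrightarrow>
      translate_avg a l t - C * penalty l (a + t) \<le> \<phi> t (frac y)"
    using P.interval_lower_bound[OF l, of "a + t"] translate_avg_eq[OF t l(1), of a] by (simp add: add_ac)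
  then have "AE x in lborel. x \<in> {a..<a+l} \<longrightarrow> translate_avg a l t - C * penalty l (a + t) \<le> \<phi> t (frac (x + t))"
    by (rule shift_set_AE[rotated]) measurable
  then show ?thesis using t by (simp add: phi_ext_def)
qed

text \<open>The lower bound averaged over t: its mean is at least the mean of averaged_phi over Q
  minus 9 C, since the penalty has mean at most 9.\<close>
lemma averaged_lower_function:
  assumes l: "0 < l" "l \<le> 1"
  shows "integrable lborel (\<lambda>t. indicator {0..1} t * (translate_avg a l t - C * penalty l (a + t)))"
    "avg (averaged_phi \<phi>) {a..<a+l} - 9 * C
       \<le> (\<integral>t. indicator {0..1} t * (translate_avg a l t - C * penalty l (a + t)) \<partial>lborel)"
proof -
  have intA: "integrable lborel (\<lambda>t. indicator {0..1} t * translate_avg a l t)"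
    by (rule integrable_bounded_on_unit[where B="4 * C / l"]) (use translate_avg_bound l in auto)
  have intH: "integrable lborel (\<lambda>t. C * (indicator {0..1} t * penalty l (a + t)))"
    using penalty_average(1)[OF l] by simp
  have eq: "(\<lambda>t. indicator {0..1} t * (translate_avg a l t - C * penalty l (a + t)))
      = (\<lambda>t. indicator {0..1} t * translate_avg a l t - C * (indicator {0..1} t * penalty l (a + t)))"
    by (auto simp: fun_eq_iff algebra_simps)
  show "integrable lborel (\<lambda>t. indicator {0..1} t * (translate_avg a l t - C * penalty l (a + t)))"
    unfolding eq using intA intH by simp
  have "C * (\<integral>t. indicator {0..1} t * penalty l (a + t) \<partial>lborel) \<le> C * 9"
    using penalty_average(2)[OF l, of a] C_nonneg by (simp add: mult_left_mono)
  then show "avg (averaged_phi \<phi>) {a..<a+l} - 9 * C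
       \<le> (\<integral>t. indicator {0..1} t * (translate_avg a l t - C * penalty l (a + t)) \<partial>lborel)"
    unfolding eq averaged_interval_integral(2)[OF l]
    by (simp add: Bochner_Integration.integral_diff[OF intA intH])
qed

text \<open>The averaged function satisfies the lower bound with constant 9 C on every interval:
  the pointwise bounds for each t hold, by Fubini, for almost every x simultaneously in t,
  and then integrate in t.\<close>
lemma averaged_lower_bound:
  assumes l: "0 < l" "l \<le> 1"
  shows "AE x in lborel. x \<in> {a..<a+l} \<longrightarrow> avg (averaged_phi \<phi>) {a..<a+l} - 9 * C \<le> averaged_phi \<phi> x"
proof -
  define Pr where "Pr t x \<longleftrightarrow> (t \<in> {0..1} \<longrightarrow> x \<in> {a..<a+l} \<longrightarrow>
      translate_avg a l t - C * penalty l (a + t) \<le> phi_ext \<phi> t (x + t))" for t x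
  have "{z \<in> space (lborel \<Otimes>\<^sub>M lborel). Pr (fst z) (snd z)} \<in> sets (lborel \<Otimes>\<^sub>M lborel)"
    by (rule predE) (unfold Pr_def, measurable)
  moreover have "AE t in lborel. AE x in lborel. Pr t x"
    using translate_lower_bound[OF l] unfolding Pr_def by auto
  ultimately have AEx: "AE x in lborel. AE t in lborel. Pr t x"
    by (subst (asm) lborel_pair.AE_commute) simp_all
  have AEint: "AE x in lborel. integrable lborel (\<lambda>t. fubini_integrand a l t x)"
    using lborel_pair.AE_integrable_snd[OF fubini_integrand_integrable[OF l, of a]]
    by (simp add: case_prod_beta')
  from AEx AEint show ?thesis
  proof eventually_elim
    fix x assume h1: "AE t in lborel. Pr t x" and h2: "integrable lborel (\<lambda>t. fubini_integrand a l t x)"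
    show "x \<in> {a..<a+l} \<longrightarrow> avg (averaged_phi \<phi>) {a..<a+l} - 9 * C \<le> averaged_phi \<phi> x"
    proof
      assume xQ: "x \<in> {a..<a+l}"
      have "(\<lambda>t. fubini_integrand a l t x) = (\<lambda>t. indicator {0..1} t * phi_ext \<phi> t (x + t))"
        using xQ unfolding fubini_integrand_def by (auto simp: fun_eq_iff)
      then have "(\<integral>t. indicator {0..1} t * (translate_avg a l t - C * penalty l (a + t)) \<partial>lborel)
          \<le> averaged_phi \<phi> x"
        unfolding averaged_phi_eq using h1 h2 xQ averaged_lower_function(1)[OF l]
        by (intro integral_mono_AE) (auto simp: Pr_def indicator_def)
      then show "avg (averaged_phi \<phi>) {a..<a+l} - 9 * C \<le> averaged_phi \<phi> x"
        using averaged_lower_function(2)[OF l, of a] by linarith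
    qed
  qed
qed

end

section \<open>Arcs of the circle\<close>

lemma circle_arc_frac: "circle_arc a l = circle_arc (frac a) l"
  unfolding circle_arc_def by simp

lemma circle_arc_eq:
  assumes a: "0 \<le> a" "a < 1" and l: "0 < l" "l \<le> 1"
  shows "circle_arc a l = (if a + l \<le> 1 then {a..<a+l} else {a..<1} \<union> {0..<a+l-1})"
proof -
  have eq: "circle_arc a l = {x. 0 \<le> x \<and> x < 1 \<and> (a \<le> x \<and> x < a + l \<or> x < a + l - 1)}"
  proof (intro equalityI subsetI)
    fix x assume "x \<in> circle_arc a l"
    then obtain s where s: "0 \<le> s" "s < l" "x = frac (a + s)" unfolding circle_arc_def by auto
    show "x \<in> {x. 0 \<le> x \<and> x < 1 \<and> (a \<le> x \<and> x < a + l \<or> x < a + l - 1)}"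
    proof (cases "a + s < 1")
      case True
      then show ?thesis using s a by (simp add: frac_eq)
    next
      case False
      have "frac ((a + s - 1) + 1) = a + s - 1" using s a l False by (subst frac_1_eq) (simp add: frac_eq)
      then show ?thesis using s a l False by auto
    qed
  next
    fix x assume x: "x \<in> {x. 0 \<le> x \<and> x < 1 \<and> (a \<le> x \<and> x < a + l \<or> x < a + l - 1)}"
    show "x \<in> circle_arc a l"
    proof (cases "a \<le> x \<and> x < a + l")
      case True
      have "x = frac (a + (x - a))" using x by (simp add: frac_eq)
      then show ?thesis unfolding circle_arc_def using True by (intro image_eqI[of _ _ "x - a"]) auto
    next
      case False
      have "frac (a + (x + 1 - a)) = x" using x by (simp add: frac_1_eq frac_eq)
      then show ?thesis unfolding circle_arc_def using x False a by (intro image_eqI[of _ _ "x + 1 - a"]) auto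
    qed
  qed
  show ?thesis
  proof (cases "a + l \<le> 1")
    case True
    then show ?thesis unfolding eq using a l by auto
  next
    case False
    then show ?thesis unfolding eq using a l by auto
  qed
qed

lemma circle_arc_sets:
  assumes "0 < l" "l \<le> 1"
  shows "circle_arc a l \<in> sets lborel"
  using circle_arc_eq[of "frac a" l] assms circle_arc_frac[of a l] by (simp add: frac_lt_1)

lemma periodic_shift_down:
  fixes \<Psi> :: "real \<Rightarrow> real"
  assumes per: "\<And>x. \<Psi> (x + 1) = \<Psi> x" and meas: "\<Psi> \<in> borel_measurable borel"
    and si: "set_integrable lborel {1..<b} \<Psi>" and ae: "AE x in lborel. x \<in> {1..<b} \<longrightarrow> c \<le> \<Psi> x"
  shows "set_integrable lborel {0..<b-1} \<Psi>"
    "(LINT x:{0..<b-1}|lborel. \<Psi> x) = (LINT x:{1..<b}|lborel. \<Psi> x)"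
    "AE x in lborel. x \<in> {0..<b-1} \<longrightarrow> c \<le> \<Psi> x"
proof -
  have e: "{0 + 1..<(b - 1) + 1} = {1..<b}" by simp
  show "set_integrable lborel {0..<b-1} \<Psi>"
    using si unfolding e[symmetric] shift_set_integrable per .
  show "(LINT x:{0..<b-1}|lborel. \<Psi> x) = (LINT x:{1..<b}|lborel. \<Psi> x)"
    unfolding e[symmetric] shift_set_integral per ..
  have "AE x in lborel. x \<in> {0..<b-1} \<longrightarrow> c \<le> \<Psi> (x + 1)"
    by (rule shift_set_AE[OF _ ae[folded e]]) (use meas in measurable)
  then show "AE x in lborel. x \<in> {0..<b-1} \<longrightarrow> c \<le> \<Psi> x" unfolding per .
qed

lemma arc_transfer:
  fixes \<Psi> :: "real \<Rightarrow> real"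
  assumes per: "\<And>x. \<Psi> (x + 1) = \<Psi> x" and meas: "\<Psi> \<in> borel_measurable borel"
    and a: "0 \<le> a" "a < 1" and l: "0 < l" "l \<le> 1"
    and si: "set_integrable lborel {a..<a+l} \<Psi>"
    and ae: "AE x in lborel. x \<in> {a..<a+l} \<longrightarrow> c \<le> \<Psi> x"
  shows "set_integrable lborel (circle_arc a l) \<Psi> \<and>
    (LINT x:circle_arc a l|lborel. \<Psi> x) = (LINT x:{a..<a+l}|lborel. \<Psi> x) \<and>
    (AE x in lborel. x \<in> circle_arc a l \<longrightarrow> c \<le> \<Psi> x)"
proof (cases "a + l \<le> 1")
  case True
  then show ?thesis using circle_arc_eq[OF a l] si ae by simp
next
  case False
  have S: "circle_arc a l = {a..<1} \<union> {0..<a+l-1}" using circle_arc_eq[OF a l] False by simp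
  have s1: "set_integrable lborel {a..<1} \<Psi>"
    by (rule set_integrable_subset[OF si]) (use False in auto)
  have s2: "set_integrable lborel {1..<a+l} \<Psi>"
    by (rule set_integrable_subset[OF si]) (use a in auto)
  have ae2: "AE x in lborel. x \<in> {1..<a+l} \<longrightarrow> c \<le> \<Psi> x"
    by (rule AE_on_subset[OF ae]) (use a in auto)
  note down = periodic_shift_down[OF per meas s2 ae2]
  have disj: "{a..<1} \<inter> {0..<a+l-1} = {}" using l by auto
  have "(LINT x:{a..<a+l}|lborel. \<Psi> x) = (LINT x:{a..<1}|lborel. \<Psi> x) + (LINT x:{1..<a+l}|lborel. \<Psi> x)"
    by (rule Ico_split_integral[OF _ _ s1 s2]) (use a False in auto)
  also have "\<dots> = (LINT x:circle_arc a l|lborel. \<Psi> x)"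
    unfolding S down(2)[symmetric] by (rule set_integral_Un[OF disj s1 down(1), symmetric])
  finally have "(LINT x:circle_arc a l|lborel. \<Psi> x) = (LINT x:{a..<a+l}|lborel. \<Psi> x)" ..
  moreover have "AE x in lborel. x \<in> {a..<1} \<longrightarrow> c \<le> \<Psi> x"
    by (rule AE_on_subset[OF ae]) (use False in auto)
  then have "AE x in lborel. x \<in> circle_arc a l \<longrightarrow> c \<le> \<Psi> x"
    using down(3) unfolding S by eventually_elim auto
  moreover have "set_integrable lborel (circle_arc a l) \<Psi>"
    unfolding S by (rule set_integrable_Un[OF s1 down(1)]) auto
  ultimately show ?thesis by blast
qed

lemma measure_circle_arc:
  assumes l: "0 < l" "l \<le> 1"
  shows "measure lborel (circle_arc a l) = l"
proof -
  have fa: "0 \<le> frac a" "frac a < 1" by (auto simp: frac_lt_1)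
  have si: "set_integrable lborel {frac a..<frac a + l} (\<lambda>_. 1::real)"
    unfolding set_integrable_def using l by auto
  have "(LINT x:circle_arc (frac a) l|lborel. (1::real)) = (LINT x:{frac a..<frac a+l}|lborel. 1)"
    using arc_transfer[OF _ _ fa l si, of 0] by auto
  also have "\<dots> = l" using set_integral_const_Ico[of "frac a" "frac a + l" 1] l by simp
  finally have int1: "(LINT x:circle_arc (frac a) l|lborel. (1::real)) = l" .
  have "emeasure lborel (circle_arc (frac a) l) \<le> emeasure lborel {0..<1::real}"
    by (rule emeasure_mono) (auto simp: circle_arc_def frac_lt_1)
  then have "emeasure lborel (circle_arc (frac a) l) \<noteq> \<infinity>" by (auto simp: top_unique)
  from set_integral_const[OF circle_arc_sets[OF l, of "frac a"] this, of "1::real"]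
  have "(LINT x:circle_arc (frac a) l|lborel. (1::real)) = measure lborel (circle_arc (frac a) l)"
    by simp
  then show ?thesis using int1 circle_arc_frac[of a l] by simp
qed

lemma (in averaging) arc_lower_bound:
  assumes l: "0 < l" "l \<le> 1"
  shows "set_integrable lborel (circle_arc a l) (averaged_phi \<phi>) \<and>
    (AE x in lborel. x \<in> circle_arc a l \<longrightarrow> avg (averaged_phi \<phi>) (circle_arc a l) - 9 * C \<le> averaged_phi \<phi> x)"
proof -
  define b where "b = frac a"
  have b: "0 \<le> b" "b < 1" unfolding b_def by (auto simp: frac_lt_1)
  note tr = arc_transfer[OF averaged_phi_periodic averaged_phi_measurable b l
      averaged_interval_integral(1)[OF l] averaged_lower_bound[OF l]]
  have "avg (averaged_phi \<phi>) (circle_arc b l) = avg (averaged_phi \<phi>) {b..<b+l}"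
    unfolding avg_def using tr measure_circle_arc[OF l] l by simp
  then show ?thesis using tr circle_arc_frac[of a l] unfolding b_def by simp
qed

section \<open>Essential infimum and supremum\<close>

lemma ess_inf_gap_imp_AE:
  assumes I: "I \<in> sets lborel" and h: "ereal v - ess_inf_on I f \<le> ereal c"
  shows "AE x in lborel. x \<in> I \<longrightarrow> v - c \<le> f x"
proof -
  define S where "S = esssup (restrict_space lborel I) (\<lambda>x. - ereal (f x))"
  have ae: "AE x in restrict_space lborel I. - ereal (f x) \<le> S" unfolding S_def by (rule esssup_AE)
  have "ereal v + S \<le> ereal c" using h unfolding ess_inf_on_def S_def[symmetric] by (simp add: minus_ereal_def)
  then have Sb: "S \<le> ereal (c - v)" by (cases S) simp_all
  have "AE x in restrict_space lborel I. v - c \<le> f x"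
    using ae by eventually_elim (use Sb in \<open>auto dest: order_trans[OF _ Sb]\<close>)
  then show ?thesis using I by (subst (asm) AE_restrict_space_iff) auto
qed

lemma AE_imp_ess_inf_gap:
  assumes I: "I \<in> sets lborel" and fm: "f \<in> borel_measurable borel"
    and ae: "AE x in lborel. x \<in> I \<longrightarrow> v - D \<le> f x"
  shows "ereal v - ess_inf_on I f \<le> ereal D"
proof -
  define S where "S = esssup (restrict_space lborel I) (\<lambda>x. - ereal (f x))"
  have m: "(\<lambda>x. - ereal (f x)) \<in> borel_measurable (restrict_space lborel I)"
    by (rule measurable_restrict_space1) (use fm in measurable)
  have "AE x in restrict_space lborel I. - ereal (f x) \<le> ereal (D - v)"
    using ae I by (subst AE_restrict_space_iff) auto
  then have Sb: "S \<le> ereal (D - v)" unfolding S_def by (rule esssup_I[OF m])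
  have "ereal v - ess_inf_on I f = ereal v + S"
    unfolding ess_inf_on_def S_def[symmetric] by (simp add: minus_ereal_def)
  also have "\<dots> \<le> ereal D" using Sb by (cases S) simp_all
  finally show ?thesis .
qed

lemma ess_sup_gap_uminus:
  "ess_sup_on I f - ereal (avg f I) = ereal (avg (\<lambda>x. - f x) I) - ess_inf_on I (\<lambda>x. - f x)"
proof -
  have "ess_sup_on I f = - ess_inf_on I (\<lambda>x. - f x)"
    unfolding ess_sup_on_def ess_inf_on_def by simp
  then show ?thesis unfolding avg_uminus by (cases "ess_inf_on I (\<lambda>x. - f x)") simp_all
qed

lemma lower_oscillation_averaged:
  assumes fam: "mean_zero_family \<phi>"
    and hyp: "\<forall>t\<in>{0..1}. \<forall>I\<in>dyadic_intervals. ereal (avg (\<phi> t) I) - ess_inf_on I (\<phi> t) \<le> ereal Cd"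
    and l: "0 < l" "l \<le> 1"
  shows "set_integrable lborel (circle_arc a l) (averaged_phi \<phi>) \<and>
    ereal (avg (averaged_phi \<phi>) (circle_arc a l)) - ess_inf_on (circle_arc a l) (averaged_phi \<phi>)
      \<le> ereal (9 * max Cd 0)"
proof -
  have "dyadic_lower_family \<phi> (max Cd 0)" unfolding dyadic_lower_family_def
  proof (intro ballI allI impI)
    fix t :: real and k j :: nat assume t: "t \<in> {0..1}" and j: "j < 2^k"
    have "ereal (avg (\<phi> t) (dyadic_ivl k (int j))) - ess_inf_on (dyadic_ivl k (int j)) (\<phi> t) \<le> ereal (max Cd 0)"
      using hyp t dyadic_ivl_in_dyadic_intervals[OF j] by (meson ereal_less_eq(3) max.cobounded1 order_trans)
    then show "AE y in lborel. y \<in> dyadic_ivl k (int j) \<longrightarrow> avg (\<phi> t) (dyadic_ivl k (int j)) - max Cd 0 \<le> \<phi> t y"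
      by (rule ess_inf_gap_imp_AE[OF dyadic_ivl_sets])
  qed
  then interpret averaging \<phi> "max Cd 0" using fam by unfold_locales simp_all
  show ?thesis
    using arc_lower_bound[OF l, of a] AE_imp_ess_inf_gap[OF circle_arc_sets[OF l] averaged_phi_measurable]
    by simp
qed

lemma upper_oscillation_averaged:
  assumes fam: "mean_zero_family \<phi>"
    and hyp: "\<forall>t\<in>{0..1}. \<forall>I\<in>dyadic_intervals. ess_sup_on I (\<phi> t) - ereal (avg (\<phi> t) I) \<le> ereal Cd"
    and l: "0 < l" "l \<le> 1"
  shows "set_integrable lborel (circle_arc a l) (averaged_phi \<phi>) \<and>
    ess_sup_on (circle_arc a l) (averaged_phi \<phi>) - ereal (avg (averaged_phi \<phi>) (circle_arc a l))
      \<le> ereal (9 * max Cd 0)"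
proof -
  have "set_integrable lborel (circle_arc a l) (averaged_phi (\<lambda>t x. - \<phi> t x)) \<and>
    ereal (avg (averaged_phi (\<lambda>t x. - \<phi> t x)) (circle_arc a l))
      - ess_inf_on (circle_arc a l) (averaged_phi (\<lambda>t x. - \<phi> t x)) \<le> ereal (9 * max Cd 0)"
    using hyp by (intro lower_oscillation_averaged[OF mean_zero_family_uminus[OF fam] _ l])
      (simp add: ess_sup_gap_uminus)
  then show ?thesis
    unfolding averaged_phi_uminus ess_sup_gap_uminus[symmetric]
    using set_integrable_mult_right_iff[of "-1" _ _ "\<lambda>x. - averaged_phi \<phi> x"] by simp
qed

theorem mainTheorem5:
  shows "(\<forall>C3d::real. \<exists>C3::real. \<forall>\<phi>.
            admissible_family \<phi> \<and>
            (\<forall>t\<in>{0..1}. \<forall>I\<in>dyadic_intervals.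
                ereal (avg (\<phi> t) I) - ess_inf_on I (\<phi> t) \<le> ereal C3d)
            \<longrightarrow> (\<forall>a l. 0 < l \<and> l \<le> 1 \<longrightarrow>
                   set_integrable lborel (circle_arc a l) (averaged_phi \<phi>) \<and>
                   ereal (avg (averaged_phi \<phi>) (circle_arc a l))
                     - ess_inf_on (circle_arc a l) (averaged_phi \<phi>) \<le> ereal C3))
       \<and>
         (\<forall>C4d::real. \<exists>C4::real. \<forall>\<phi>.
            admissible_family \<phi> \<and>
            (\<forall>t\<in>{0..1}. \<forall>I\<in>dyadic_intervals.
                ess_sup_on I (\<phi> t) - ereal (avg (\<phi> t) I) \<le> ereal C4d)
            \<longrightarrow> (\<forall>a l. 0 < l \<and> l \<le> 1 \<longrightarrow>
                   set_integrable lborel (circle_arc a l) (averaged_phi \<phi>) \<and>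
                   ess_sup_on (circle_arc a l) (averaged_phi \<phi>)
                     - ereal (avg (averaged_phi \<phi>) (circle_arc a l)) \<le> ereal C4))"
proof (intro conjI allI)
  fix C3d :: real
  show "\<exists>C3::real. \<forall>\<phi>. admissible_family \<phi> \<and>
            (\<forall>t\<in>{0..1}. \<forall>I\<in>dyadic_intervals. ereal (avg (\<phi> t) I) - ess_inf_on I (\<phi> t) \<le> ereal C3d)
            \<longrightarrow> (\<forall>a l. 0 < l \<and> l \<le> 1 \<longrightarrow>
                   set_integrable lborel (circle_arc a l) (averaged_phi \<phi>) \<and>
                   ereal (avg (averaged_phi \<phi>) (circle_arc a l))
                     - ess_inf_on (circle_arc a l) (averaged_phi \<phi>) \<le> ereal C3)"
    by (intro exI[of _ "9 * max C3d 0"] allI impI, elim conjE)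
      (rule lower_oscillation_averaged[OF admissible_imp_mean_zero]; assumption)
next
  fix C4d :: real
  show "\<exists>C4::real. \<forall>\<phi>. admissible_family \<phi> \<and>
            (\<forall>t\<in>{0..1}. \<forall>I\<in>dyadic_intervals. ess_sup_on I (\<phi> t) - ereal (avg (\<phi> t) I) \<le> ereal C4d)
            \<longrightarrow> (\<forall>a l. 0 < l \<and> l \<le> 1 \<longrightarrow>
                   set_integrable lborel (circle_arc a l) (averaged_phi \<phi>) \<and>
                   ess_sup_on (circle_arc a l) (averaged_phi \<phi>)
                     - ereal (avg (averaged_phi \<phi>) (circle_arc a l)) \<le> ereal C4)"
    by (intro exI[of _ "9 * max C4d 0"] allI impI, elim conjE)
      (rule upper_oscillation_averaged[OF admissible_imp_mean_zero]; assumption)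
qed

end
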